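(* Let $n\ge 2$ be an integer, $k,c_b>0$, $\rho_0>0$, and let $\lambda_{1,0},\dots,\lambda_{n,0}$ be real numbers with $\lambda_{1,0}<\lambda_{2,0}\le\cdots\le\lambda_{n,0}$. Consider the system $$\lambda_i'=-\lambda_i^2+\frac{k}{n}(\rho-c_b)\ (i=1,\dots,n),\qquad \rho'=-\rho\lambda,\quad \lambda=\sum_{i=1}^n\lambda_i,\qquad \rho(0)=\rho_0,\ \lambda_i(0)=\lambda_{i,0},$$ suppose its maximal interval of existence is $[0,t_B)$ with $0<t_B<\infty$, let $u_i(t)=e^{\int_0^t\lambda_i(s)\,ds}$, and let $p,q$ satisfy $\lim_{t\to t_B^-}u_1'(t)u_n(t)=-p$, $\lim_{t\to t_B^-}u_1(t)u_n'(t)=q$. Assume $p>q$ and that $\xi_1:=\frac{-p}{p-q}$ and $\xi_n:=\frac{q}{p-q}$ both satisfy $\xi^2+\xi=0$ (so $\xi_1=-1$, $\xi_n=0$), and define $R_1(t):=\lambda_1(t)+\frac1{t_B-t}$. Then $\lambda_i\in L^1(0,t_B)$ for $i=2,\dots,n$, and $\int_0^{t}R_1(s)\,ds$ converges to a finite constant as $t\to t_B^-$.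
   Context: Solutions are real-valued and continuously differentiable on $[0,t_B)$. It is known that the limits defining $p,q$ exist with $0\le q\le p$. *)

theory Defs
  imports "HOL-Analysis.Analysis"
begin

definition is_solution ::
  "nat \<Rightarrow> real \<Rightarrow> real \<Rightarrow> real \<Rightarrow> (nat \<Rightarrow> real) \<Rightarrow> real
   \<Rightarrow> (nat \<Rightarrow> real \<Rightarrow> real) \<Rightarrow> (real \<Rightarrow> real) \<Rightarrow> bool" where
  "is_solution n k cb rho0 lam0 T lam rho \<longleftrightarrow>
     (\<forall>t\<in>{0..<T}. \<forall>i\<in>{1..n}.
        (lam i has_real_derivative (k / real n * (rho t - cb) - lam i t * lam i t))
          (at t within {0..<T})) \<and>
     (\<forall>t\<in>{0..<T}.
        (rho has_real_derivative (- rho t * (\<Sum>i=1..n. lam i t))) (at t within {0..<T})) \<and>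
     rho 0 = rho0 \<and> (\<forall>i\<in>{1..n}. lam i 0 = lam0 i)"

definition maximal_solution ::
  "nat \<Rightarrow> real \<Rightarrow> real \<Rightarrow> real \<Rightarrow> (nat \<Rightarrow> real) \<Rightarrow> real
   \<Rightarrow> (nat \<Rightarrow> real \<Rightarrow> real) \<Rightarrow> (real \<Rightarrow> real) \<Rightarrow> bool" where
  "maximal_solution n k cb rho0 lam0 T lam rho \<longleftrightarrow>
     is_solution n k cb rho0 lam0 T lam rho \<and>
     \<not> (\<exists>T'>T. \<exists>lam' rho'. is_solution n k cb rho0 lam0 T' lam' rho')"

end

theory Submission
  imports Defs
begin

(*
  The functions u_i = exp (integral of lambda_i) all solve the linear equation u'' = a(t) u with
  a = k/n (rho - c_b), so any two of them have a constant Wronskian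
  u_i u_j (lambda_j - lambda_i) = lambda_j(0) - lambda_i(0).  Hence lambda_1 <= lambda_i <= lambda_n,
  every u_i is a combination of u_1 and u_n, rho * prod u_i = rho_0, and q + p = lambda_n(0) - lambda_1(0)
  > 0, which together with xi_1^2 + xi_1 = 0 forces q = 0.

  Then (u_1 u_n)' tends to -p.  If u_1 u_n stayed away from 0, all lambda_i and rho would stay bounded
  and the solution could be continued beyond t_B by Picard iteration, contradicting maximality; so
  u_1 u_n ~ p (t_B - t) and lambda_n (t_B - t) -> 0.  The latter controls u_n^(3-n), which yields
  u_n'' <= K (t_B - t)^(-5/4); integrating twice shows that u_n converges, and a convexity argument
  shows that its limit l is positive.  Therefore u_1 -> 0 and rho -> infinity, so eventually u_i'' > 0
  and lambda_i = u_i'/u_i has a constant sign; as ln u_i converges for i >= 2, lambda_i is integrable.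
  Finally the integral of R_1 over [0, t] equals ln (u_1 u_n / (t_B - t)) - ln u_n + ln t_B, which
  tends to ln p - ln l + ln t_B.
*)

section \<open>Local existence and continuation of solutions\<close>

text \<open>The usual metric on \<open>nat\<close> induces its discrete topology and makes \<open>nat \<Rightarrow>\<^sub>C real\<close>
  a Banach space, which serves as the state space of the system.\<close>

instantiation nat :: metric_space
begin

definition dist_nat :: "nat \<Rightarrow> nat \<Rightarrow> real" where
  "dist_nat m n = \<bar>real m - real n\<bar>"

definition uniformity_nat :: "(nat \<times> nat) filter" where
  "uniformity_nat = (INF e\<in>{0<..}. principal {(x, y). dist x y < e})"

instance
proof
  show "uniformity = (INF e\<in>{0<..}. principal {(x, y). dist (x::nat) y < e})"
    by (rule uniformity_nat_def)
  show "open U \<longleftrightarrow> (\<forall>x\<in>U. \<forall>\<^sub>F (x', y) in uniformity. x' = x \<longrightarrow> y \<in> U)" for U :: "nat set"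
  proof -
    have "\<forall>\<^sub>F (x', y) in uniformity. x' = x \<longrightarrow> y \<in> U" if "x \<in> U" for x
    proof -
      have "dist x' y < 1/2 \<Longrightarrow> x' = y" for x' y :: nat
        by (cases x' y rule: linorder_cases) (auto simp: dist_nat_def)
      then have "\<forall>\<^sub>F (x', y) in principal {(x, y). dist (x::nat) y < 1/2}. x' = x \<longrightarrow> y \<in> U"
        unfolding eventually_principal using that by auto
      then show ?thesis
        unfolding uniformity_nat_def by (rule eventually_INF1[rotated]) simp
    qed
    then show ?thesis by (simp add: open_discrete)
  qed
qed (auto simp: dist_nat_def)

end

instance bcontfun :: (metric_space, banach) banach ..

text \<open>Picard's integral operator, extended constantly outside \<open>[t0, t0 + h]\<close> so that it
  produces bounded continuous functions.\<close>

definition picard_map ::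
  "('a::real_normed_vector \<Rightarrow> 'a) \<Rightarrow> 'a \<Rightarrow> real \<Rightarrow> real \<Rightarrow> (real \<Rightarrow>\<^sub>C 'a) \<Rightarrow> real \<Rightarrow> 'a" where
  "picard_map F y0 t0 h z = ext_cont (\<lambda>t. y0 + integral {t0..t} (\<lambda>s. F (z s))) t0 (t0 + h)"

context
  fixes F :: "'a::banach \<Rightarrow> 'a" and y0 :: 'a and r L M t0 h :: real
  assumes lipschitz: "L-lipschitz_on (cball y0 r) F"
    and bounded: "\<And>y. y \<in> cball y0 r \<Longrightarrow> norm (F y) \<le> M"
    and h: "0 < h"
begin

private lemma clamp_between: "clamp t0 (t0 + h) t \<in> {t0..t0 + h}"
  using clamp_in_interval[of t0 "t0 + h" t] h by simp

private lemma continuous_on_F_comp: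
  assumes "z \<in> PiC UNIV (\<lambda>_. cball y0 r)"
  shows "continuous_on S (\<lambda>s. F (z s))"
  by (rule continuous_on_compose2[OF lipschitz_on_continuous_on[OF lipschitz]])
    (use assms in \<open>auto simp: mem_PiC_iff\<close>)

private lemma norm_integral_F_comp_le:
  assumes "z \<in> PiC UNIV (\<lambda>_. cball y0 r)" and "t0 \<le> t"
  shows "norm (integral {t0..t} (\<lambda>s. F (z s))) \<le> M * (t - t0)"
  by (rule integral_bound) (use assms bounded continuous_on_F_comp in \<open>auto simp: mem_PiC_iff Pi_iff\<close>)

lemma picard_map_in_bcontfun:
  assumes "z \<in> PiC UNIV (\<lambda>_. cball y0 r)"
  shows "picard_map F y0 t0 h z \<in> bcontfun"
proof -
  define G where "G t = y0 + integral {t0..t} (\<lambda>s. F (z s))" for t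
  have cont: "continuous_on (cbox t0 (t0 + h)) G"
    unfolding G_def cbox_interval
    by (intro continuous_intros indefinite_integral_continuous_1 integrable_continuous_interval
        continuous_on_F_comp[OF assms])
  have "bounded (range (\<lambda>t. G (clamp t0 (t0 + h) t)))"
    by (rule clamp_bounded[OF compact_imp_bounded[OF compact_continuous_image[OF cont]]]) simp
  with clamp_continuous_on[OF cont] show ?thesis
    unfolding picard_map_def bcontfun_def G_def[symmetric] ext_cont_def by blast
qed

lemma picard_map_apply:
  "picard_map F y0 t0 h z t = y0 + integral {t0..clamp t0 (t0 + h) t} (\<lambda>s. F (z s))"
  by (simp add: picard_map_def ext_cont_def)

lemma picard_map_mem_cball:
  assumes "z \<in> PiC UNIV (\<lambda>_. cball y0 r)" and "h * M \<le> r"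
  shows "picard_map F y0 t0 h z t \<in> cball y0 r"
proof -
  have "norm (integral {t0..clamp t0 (t0 + h) t} (\<lambda>s. F (z s))) \<le> M * (clamp t0 (t0 + h) t - t0)"
    using norm_integral_F_comp_le[OF assms(1)] clamp_between by auto
  also have "\<dots> \<le> M * h"
  proof (rule mult_left_mono)
    show "0 \<le> M"
      using assms(1) bounded[of "z 0"] norm_ge_zero[of "F (z 0)"]
      unfolding mem_PiC_iff Pi_iff by (meson UNIV_I order_trans)
  qed (use clamp_between[of t] in auto)
  finally show ?thesis
    using assms(2) by (simp add: picard_map_apply dist_norm mult.commute)
qed

lemma picard_map_contraction:
  assumes z: "z \<in> PiC UNIV (\<lambda>_. cball y0 r)" and w: "w \<in> PiC UNIV (\<lambda>_. cball y0 r)"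
  shows "dist (picard_map F y0 t0 h z t) (picard_map F y0 t0 h w t) \<le> h * L * dist z w"
proof -
  define c where "c = clamp t0 (t0 + h) t"
  have c: "t0 \<le> c" "c \<le> t0 + h" using clamp_between by (auto simp: c_def)
  have "dist (picard_map F y0 t0 h z t) (picard_map F y0 t0 h w t)
      = norm (integral {t0..c} (\<lambda>s. F (z s) - F (w s)))"
    by (simp add: picard_map_apply c_def[symmetric] dist_norm integral_diff
        integrable_continuous_interval continuous_on_F_comp z w)
  also have "\<dots> \<le> (L * dist z w) * (c - t0)"
  proof (rule integral_bound)
    fix s
    have "norm (F (z s) - F (w s)) \<le> L * dist (z s) (w s)"
      using lipschitz_onD[OF lipschitz, of "z s" "w s"] z w by (auto simp: mem_PiC_iff Pi_iff dist_norm)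
    also have "\<dots> \<le> L * dist z w"
      using dist_bounded lipschitz_on_nonneg[OF lipschitz] by (rule mult_left_mono)
    finally show "norm (F (z s) - F (w s)) \<le> L * dist z w" .
  qed (use c z w in \<open>auto intro!: continuous_intros continuous_on_F_comp\<close>)
  also have "\<dots> \<le> (L * dist z w) * h"
    using c lipschitz_on_nonneg[OF lipschitz] by (intro mult_left_mono) auto
  finally show ?thesis by (simp add: mult_ac)
qed

lemma ode_local_solution_exists:
  assumes "0 \<le> r" and "h * M \<le> r" and "h * L < 1"
  obtains z :: "real \<Rightarrow> 'a" where "z t0 = y0"
    and "\<And>t. t \<in> {t0..t0 + h} \<Longrightarrow> (z has_vector_derivative F (z t)) (at t within {t0..t0 + h})"
proof -
  define S where "S = PiC UNIV (\<lambda>_::real. cball y0 r)"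
  define T where "T z = Bcontfun (picard_map F y0 t0 h z)" for z
  have T_apply: "T z t = picard_map F y0 t0 h z t" if "z \<in> S" for z t
    using picard_map_in_bcontfun that by (simp add: T_def S_def Bcontfun_inverse)
  have "complete S"
    unfolding complete_eq_closed S_def by (rule closed_PiC) auto
  moreover have "S \<noteq> {}"
  proof -
    have "const_bcontfun y0 \<in> S"
      using assms(1) by (simp add: S_def mem_PiC_iff const_bcontfun.rep_eq)
    then show ?thesis by blast
  qed
  moreover have "T ` S \<subseteq> S"
    using picard_map_mem_cball assms(2) by (auto simp: S_def mem_PiC_iff T_apply[unfolded S_def])
  moreover have "dist (T z) (T w) \<le> (h * L) * dist z w" if "z \<in> S" "w \<in> S" for z w
    using picard_map_contraction that by (intro dist_bound) (auto simp: T_apply S_def)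
  ultimately obtain z where z: "z \<in> S" "T z = z"
    using Banach_fix[of S "h * L" T] h lipschitz_on_nonneg[OF lipschitz] assms(3) by auto
  have z_eq: "z t = y0 + integral {t0..t} (\<lambda>s. F (z s))" if "t \<in> {t0..t0 + h}" for t
    using T_apply[OF z(1), of t] z(2) that by (simp add: picard_map_apply cbox_interval)
  show ?thesis
  proof
    show "z t0 = y0" using z_eq[of t0] h by simp
    fix t assume t: "t \<in> {t0..t0 + h}"
    have "((\<lambda>u. y0 + integral {t0..u} (\<lambda>s. F (z s))) has_vector_derivative F (z t))
        (at t within {t0..t0 + h})"
      using continuous_on_F_comp z(1) t unfolding S_def
      by (auto intro!: derivative_eq_intros integral_has_vector_derivative)
    from has_vector_derivative_transform[OF t z_eq this]
    show "(z has_vector_derivative F (z t)) (at t within {t0..t0 + h})" .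
  qed
qed

end

lemma has_real_derivative_bcontfun_apply:
  fixes z :: "real \<Rightarrow> ('a::topological_space \<Rightarrow>\<^sub>C real)"
  assumes "(z has_vector_derivative D) F"
  shows "((\<lambda>t. z t j) has_real_derivative D j) F"
proof -
  have "bounded_linear (\<lambda>f::'a \<Rightarrow>\<^sub>C real. f j)"
    by (rule bounded_linear_intro[where K = 1]) (use norm_bounded[where 'b = real] in auto)
  from bounded_linear.has_vector_derivative[OF this assms]
  show ?thesis by (simp add: has_real_derivative_iff_has_vector_derivative)
qed

definition trunc_bcontfun :: "nat \<Rightarrow> (nat \<Rightarrow> real) \<Rightarrow> (nat \<Rightarrow>\<^sub>C real)" where
  "trunc_bcontfun n f = Bcontfun (\<lambda>i. if i \<le> n then f i else 0)"

lemma trunc_bcontfun_apply [simp]: "trunc_bcontfun n f i = (if i \<le> n then f i else 0)"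
proof -
  have "(\<lambda>i. if i \<le> n then f i else 0) \<in> bcontfun"
  proof (rule bcontfun_normI)
    show "norm (if i \<le> n then f i else 0) \<le> (\<Sum>j\<le>n. \<bar>f j\<bar>)" for i
      using member_le_sum[of i "{..n}" "\<lambda>j. \<bar>f j\<bar>"] by (auto simp: sum_nonneg)
  qed simp
  then show ?thesis by (simp add: trunc_bcontfun_def Bcontfun_inverse)
qed

text \<open>The state of the system is a sequence \<open>v\<close> with \<open>v 0 = \<rho>\<close> and \<open>v i = \<lambda>\<^sub>i\<close> for
  \<open>i = 1..n\<close>; it is embedded into the Banach space \<open>nat \<Rightarrow>\<^sub>C real\<close> by truncation.\<close>

definition system_rhs :: "nat \<Rightarrow> real \<Rightarrow> real \<Rightarrow> (nat \<Rightarrow> real) \<Rightarrow> nat \<Rightarrow> real" where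
  "system_rhs n k cb v j =
     (if j = 0 then - v 0 * (\<Sum>i=1..n. v i) else k / real n * (v 0 - cb) - v j * v j)"

definition system_field :: "nat \<Rightarrow> real \<Rightarrow> real \<Rightarrow> (nat \<Rightarrow>\<^sub>C real) \<Rightarrow> (nat \<Rightarrow>\<^sub>C real)" where
  "system_field n k cb y = trunc_bcontfun n (system_rhs n k cb y)"

lemma abs_mult_diff_le: "\<bar>a * b - c * d\<bar> \<le> \<bar>a - c\<bar> * \<bar>b\<bar> + \<bar>c\<bar> * \<bar>b - d\<bar>" for a b c d :: real
proof -
  have "a * b - c * d = (a - c) * b + c * (b - d)" by algebra
  then show ?thesis by (metis abs_mult abs_triangle_ineq)
qed

lemma abs_sum_le_card_mult:
  assumes "\<And>i. i \<in> {1..n} \<Longrightarrow> \<bar>f i\<bar> \<le> (c::real)"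
  shows "\<bar>\<Sum>i=1..n. f i\<bar> \<le> real n * c"
  by (rule order_trans[OF sum_abs]) (use sum_bounded_above[of "{1..n}" "\<lambda>i. \<bar>f i\<bar>" c] assms in simp)

lemma system_rhs_lipschitz:
  fixes x y :: "nat \<Rightarrow> real"
  assumes k: "0 \<le> k" and xR: "\<And>i. \<bar>x i\<bar> \<le> R" and yR: "\<And>i. \<bar>y i\<bar> \<le> R"
    and xy: "\<And>i. \<bar>x i - y i\<bar> \<le> d"
  shows "\<bar>system_rhs n k cb x j - system_rhs n k cb y j\<bar> \<le> (2 * real n * R + k / real n + 2 * R) * d"
proof -
  have R: "0 \<le> R" and d: "0 \<le> d" using xR[of 0] xy[of 0] by auto
  have kn: "0 \<le> k / real n" using k by simp
  show ?thesis
  proof (cases "j = 0")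
    case True
    have "\<bar>x 0 * (\<Sum>i=1..n. x i) - y 0 * (\<Sum>i=1..n. y i)\<bar>
        \<le> \<bar>x 0 - y 0\<bar> * \<bar>\<Sum>i=1..n. x i\<bar> + \<bar>y 0\<bar> * \<bar>(\<Sum>i=1..n. x i) - (\<Sum>i=1..n. y i)\<bar>"
      by (rule abs_mult_diff_le)
    also have "\<dots> \<le> d * (real n * R) + R * (real n * d)"
    proof -
      have "\<bar>(\<Sum>i=1..n. x i) - (\<Sum>i=1..n. y i)\<bar> \<le> real n * d"
        unfolding sum_subtractf[symmetric] by (rule abs_sum_le_card_mult) (rule xy)
      then show ?thesis
        using xR yR xy R d by (intro add_mono mult_mono abs_sum_le_card_mult) auto
    qed
    moreover have "(2 * real n * R + k / real n + 2 * R) * d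
        = d * (real n * R) + R * (real n * d) + (k / real n * d + 2 * (R * d))"
      by (simp add: algebra_simps)
    moreover have "0 \<le> k / real n * d" "0 \<le> R * d"
      using mult_nonneg_nonneg[OF kn d] mult_nonneg_nonneg[OF R d] by simp_all
    ultimately show ?thesis
      using True by (simp add: system_rhs_def abs_minus_commute)
  next
    case False
    have "\<bar>x j * x j - y j * y j\<bar> \<le> \<bar>x j - y j\<bar> * \<bar>x j\<bar> + \<bar>y j\<bar> * \<bar>x j - y j\<bar>"
      by (rule abs_mult_diff_le)
    also have "\<dots> \<le> d * R + R * d"
      using xR yR xy R d by (intro add_mono mult_mono) auto
    finally have sq: "\<bar>x j * x j - y j * y j\<bar> \<le> 2 * R * d" by simp
    have "\<bar>k / real n * (x 0 - y 0)\<bar> \<le> k / real n * d"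
      unfolding abs_mult abs_of_nonneg[OF kn] by (rule mult_left_mono[OF xy kn])
    moreover have "system_rhs n k cb x j - system_rhs n k cb y j
        = k / real n * (x 0 - y 0) - (x j * x j - y j * y j)"
      using False by (simp add: system_rhs_def right_diff_distrib)
    ultimately have "\<bar>system_rhs n k cb x j - system_rhs n k cb y j\<bar> \<le> k / real n * d + 2 * R * d"
      using sq abs_triangle_ineq4[of "k / real n * (x 0 - y 0)" "x j * x j - y j * y j"] by simp
    moreover have "(2 * real n * R + k / real n + 2 * R) * d = 2 * real n * R * d + (k / real n * d + 2 * R * d)"
      by (simp add: algebra_simps)
    moreover have "0 \<le> 2 * real n * R * d" using R d by simp
    ultimately show ?thesis by linarith
  qed
qed

lemma system_field_lipschitz:
  fixes x y :: "nat \<Rightarrow>\<^sub>C real"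
  assumes k: "0 \<le> k" and x: "norm x \<le> R" and y: "norm y \<le> R"
  shows "norm (system_field n k cb x - system_field n k cb y)
    \<le> (2 * real n * R + k / real n + 2 * R) * norm (x - y)"
proof (rule norm_bound)
  fix j
  have xR: "\<bar>x i\<bar> \<le> R" and yR: "\<bar>y i\<bar> \<le> R" and xy: "\<bar>x i - y i\<bar> \<le> norm (x - y)" for i
    using norm_bounded[of x i] norm_bounded[of y i] norm_bounded[of "x - y" i] x y by auto
  have "0 \<le> (2 * real n * R + k / real n + 2 * R) * norm (x - y)"
    using xR[of 0] k by simp
  then show "norm ((system_field n k cb x - system_field n k cb y) j)
      \<le> (2 * real n * R + k / real n + 2 * R) * norm (x - y)"
    using system_rhs_lipschitz[OF k xR yR xy] by (simp add: system_field_def)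
qed

lemma system_field_bounded:
  fixes x :: "nat \<Rightarrow>\<^sub>C real"
  assumes k: "0 \<le> k" and cb: "0 \<le> cb" and x: "norm x \<le> R"
  shows "norm (system_field n k cb x) \<le> real n * R * R + k / real n * (R + cb) + R * R"
proof (rule norm_bound)
  fix j
  have xR: "\<bar>x i\<bar> \<le> R" for i
    using norm_bounded[of x i] x by auto
  have R: "0 \<le> R" using xR[of 0] by auto
  have kn: "0 \<le> k / real n" using k by simp
  have "\<bar>system_rhs n k cb x j\<bar> \<le> real n * R * R + k / real n * (R + cb) + R * R"
  proof (cases "j = 0")
    case True
    have "\<bar>x 0 * (\<Sum>i=1..n. x i)\<bar> \<le> R * (real n * R)"
      unfolding abs_mult using xR R by (intro mult_mono abs_sum_le_card_mult) auto
    moreover have "0 \<le> k / real n * (R + cb) + R * R"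
      using R k cb by simp
    ultimately show ?thesis
      using True by (simp add: system_rhs_def mult_ac)
  next
    case False
    have "\<bar>k / real n * (x 0 - cb)\<bar> \<le> k / real n * (R + cb)"
    proof -
      have "\<bar>x 0 - cb\<bar> \<le> R + cb" using xR[of 0] cb by (auto simp: abs_le_iff)
      then show ?thesis
        unfolding abs_mult abs_of_nonneg[OF kn] by (rule mult_left_mono[OF _ kn])
    qed
    moreover have "\<bar>x j * x j\<bar> \<le> R * R"
      unfolding abs_mult using xR[of j] R by (intro mult_mono) auto
    moreover have "system_rhs n k cb x j = k / real n * (x 0 - cb) - x j * x j"
      using False by (simp add: system_rhs_def)
    then have "\<bar>system_rhs n k cb x j\<bar> \<le> \<bar>k / real n * (x 0 - cb)\<bar> + \<bar>x j * x j\<bar>"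
      by (simp only: abs_triangle_ineq4)
    moreover have "0 \<le> real n * R * R" using R by simp
    ultimately show ?thesis by linarith
  qed
  moreover have "0 \<le> real n * R * R + k / real n * (R + cb) + R * R"
    using R kn cb by (intro add_nonneg_nonneg mult_nonneg_nonneg) auto
  ultimately show "norm (system_field n k cb x j) \<le> real n * R * R + k / real n * (R + cb) + R * R"
    by (simp add: system_field_def)
qed

lemma system_rhs_cong:
  assumes "\<And>i. i \<le> n \<Longrightarrow> v i = w i" and "j \<le> n"
  shows "system_rhs n k cb v j = system_rhs n k cb w j"
  using assms by (simp add: system_rhs_def)

lemma has_real_derivative_within_glue:
  fixes f g :: "real \<Rightarrow> real"
  assumes c: "a \<le> c" "c < b"
    and f: "\<And>t. t \<in> {a..<b} \<Longrightarrow> (f has_real_derivative f' t) (at t within {a..<b})"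
    and g: "\<And>t. t \<in> {c..b'} \<Longrightarrow> (g has_real_derivative g' t) (at t within {c..b'})"
    and fg: "f c = g c" "f' c = g' c" and t: "t \<in> {a..<b'}"
  shows "((\<lambda>s. if s \<le> c then f s else g s) has_real_derivative (if t \<le> c then f' t else g' t))
    (at t within {a..<b'})"
proof -
  consider "t < c" | "t = c" | "c < t" by linarith
  then show ?thesis
  proof cases
    case 1
    have "at t within {a..<b} = at t within {a..<b'}"
      by (rule at_within_nhd[of t "{..<min c b'}"]) (use 1 c t in auto)
    with f[of t] 1 c t have "(f has_real_derivative f' t) (at t within {a..<b'})" by auto
    then have "((\<lambda>s. if s \<le> c then f s else g s) has_real_derivative f' t) (at t within {a..<b'})"
      by (rule has_field_derivative_transform_within[of _ _ _ _ "c - t"])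
        (use 1 t in \<open>auto simp: dist_real_def\<close>)
    then show ?thesis using 1 by simp
  next
    case 2
    have "((\<lambda>s. if s \<le> c then f s else g s) has_real_derivative f' c) (at c within {a..c})"
      by (rule has_field_derivative_transform_within[of f _ _ _ 1])
        (use f[of c] c in \<open>auto intro: has_field_derivative_subset\<close>)
    moreover have "((\<lambda>s. if s \<le> c then f s else g s) has_real_derivative f' c) (at c within {c..<b'})"
      by (rule has_field_derivative_transform_within[of g _ _ _ 1])
        (use g[of c] c t 2 fg in \<open>auto intro: has_field_derivative_subset\<close>)
    moreover have "{a..<b'} = {a..c} \<union> {c..<b'}" using c t 2 by auto
    ultimately show ?thesis
      using 2 unfolding has_field_derivative_iff by (simp add: Lim_Un)
  next
    case 3
    have "at t within {c..b'} = at t within {a..<b'}"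
      by (rule at_within_nhd[of t "{c<..<b'}"]) (use 3 c t in auto)
    with g[of t] 3 t have "(g has_real_derivative g' t) (at t within {a..<b'})" by auto
    then have "((\<lambda>s. if s \<le> c then f s else g s) has_real_derivative g' t) (at t within {a..<b'})"
      by (rule has_field_derivative_transform_within[of _ _ _ _ "t - c"])
        (use 3 t in \<open>auto simp: dist_real_def\<close>)
    then show ?thesis using 3 by simp
  qed
qed

definition solution_state :: "(nat \<Rightarrow> real \<Rightarrow> real) \<Rightarrow> (real \<Rightarrow> real) \<Rightarrow> real \<Rightarrow> nat \<Rightarrow> real" where
  "solution_state lam rho t j = (if j = 0 then rho t else lam j t)"

lemma solution_state_has_derivative:
  assumes "is_solution n k cb rho0 lam0 T lam rho" and "t \<in> {0..<T}" "j \<le> n"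
  shows "((\<lambda>t. solution_state lam rho t j) has_real_derivative
    system_rhs n k cb (solution_state lam rho t) j) (at t within {0..<T})"
proof -
  have "(\<lambda>t. solution_state lam rho t j) = (if j = 0 then rho else lam j)"
    by (auto simp: solution_state_def)
  moreover have "(\<Sum>i=1..n. solution_state lam rho t i) = (\<Sum>i=1..n. lam i t)"
    by (simp add: solution_state_def)
  ultimately show ?thesis
    using assms unfolding is_solution_def
    by (cases "j = 0") (auto simp: solution_state_def system_rhs_def)
qed

lemma is_solution_if_state_has_derivative:
  assumes "\<And>t j. t \<in> {0..<T} \<Longrightarrow> j \<le> n \<Longrightarrow>
      ((\<lambda>t. w t j) has_real_derivative system_rhs n k cb (w t) j) (at t within {0..<T})"
    and "w 0 0 = rho0" and "\<And>i. i \<in> {1..n} \<Longrightarrow> w 0 i = lam0 i"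
  shows "is_solution n k cb rho0 lam0 T (\<lambda>i t. w t i) (\<lambda>t. w t 0)"
  unfolding is_solution_def
proof (intro conjI ballI)
  fix t i assume "t \<in> {0..<T}" "i \<in> {1..n}"
  then show "((\<lambda>t. w t i) has_real_derivative k / real n * (w t 0 - cb) - w t i * w t i)
      (at t within {0..<T})"
    using assms(1)[of t i] by (simp add: system_rhs_def)
next
  fix t assume "t \<in> {0..<T}"
  then show "((\<lambda>t. w t 0) has_real_derivative - w t 0 * (\<Sum>i=1..n. w t i)) (at t within {0..<T})"
    using assms(1)[of t 0] by (simp add: system_rhs_def)
qed (use assms(2,3) in auto)

lemma solution_continuation:
  fixes z :: "real \<Rightarrow> (nat \<Rightarrow>\<^sub>C real)"
  assumes sol: "is_solution n k cb rho0 lam0 tB lam rho"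
    and t0: "0 \<le> t0" "t0 < tB" "tB < T"
    and z0: "z t0 = trunc_bcontfun n (solution_state lam rho t0)"
    and z: "\<And>t. t \<in> {t0..T} \<Longrightarrow> (z has_vector_derivative system_field n k cb (z t)) (at t within {t0..T})"
  shows "\<exists>lam' rho'. is_solution n k cb rho0 lam0 T lam' rho'"
proof -
  define w where "w t = (if t \<le> t0 then solution_state lam rho t else z t)" for t
  have "((\<lambda>t. w t j) has_real_derivative system_rhs n k cb (w t) j) (at t within {0..<T})"
    if t: "t \<in> {0..<T}" and j: "j \<le> n" for t j
  proof -
    have dz: "((\<lambda>s. z s j) has_real_derivative system_rhs n k cb (z s) j) (at s within {t0..T})"
      if "s \<in> {t0..T}" for s
      using has_real_derivative_bcontfun_apply[OF z[OF that], of j] j by (simp add: system_field_def)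
    have "system_rhs n k cb (solution_state lam rho t0) j = system_rhs n k cb (z t0) j"
      using j by (intro system_rhs_cong) (simp_all add: z0)
    then have "((\<lambda>t. w t j) has_real_derivative (if t \<le> t0
        then system_rhs n k cb (solution_state lam rho t) j else system_rhs n k cb (z t) j))
        (at t within {0..<T})"
      unfolding w_def if_distrib[of "\<lambda>v. v j"]
      by (intro has_real_derivative_within_glue[OF t0(1,2) _ dz _ _ t]
          solution_state_has_derivative[OF sol _ j]) (simp_all add: z0 j)
    moreover have "(if t \<le> t0 then system_rhs n k cb (solution_state lam rho t) j
        else system_rhs n k cb (z t) j) = system_rhs n k cb (w t) j"
      by (simp add: w_def)
    ultimately show ?thesis by simp
  qed
  moreover have "w 0 = solution_state lam rho 0" using t0 by (simp add: w_def)
  moreover have "rho 0 = rho0" "\<And>i. i \<in> {1..n} \<Longrightarrow> lam i 0 = lam0 i"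
    using sol unfolding is_solution_def by auto
  ultimately have "is_solution n k cb rho0 lam0 T (\<lambda>i t. w t i) (\<lambda>t. w t 0)"
    by (intro is_solution_if_state_has_derivative) (simp_all add: solution_state_def)
  then show ?thesis by blast
qed

lemma bounded_solution_continues:
  assumes sol: "is_solution n k cb rho0 lam0 tB lam rho" and tB: "0 < tB"
    and k: "0 \<le> k" and cb: "0 \<le> cb"
    and lam_bounded: "\<And>t i. t \<in> {0..<tB} \<Longrightarrow> i \<in> {1..n} \<Longrightarrow> \<bar>lam i t\<bar> \<le> B"
    and rho_bounded: "\<And>t. t \<in> {0..<tB} \<Longrightarrow> \<bar>rho t\<bar> \<le> B"
  shows "\<exists>T>tB. \<exists>lam' rho'. is_solution n k cb rho0 lam0 T lam' rho'"
proof -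
  define Y where "Y t = trunc_bcontfun n (solution_state lam rho t)" for t
  have norm_Y: "norm (Y t) \<le> B" if "t \<in> {0..<tB}" for t
    by (rule norm_bound)
      (use lam_bounded[OF that] rho_bounded[OF that] in \<open>auto simp: Y_def solution_state_def\<close>)
  define R where "R = B + 1"
  define L where "L = 2 * real n * R + k / real n + 2 * R"
  define M where "M = real n * R * R + k / real n * (R + cb) + R * R"
  have "norm (Y 0) \<le> B" using norm_Y tB by simp
  then have R: "0 \<le> R" unfolding R_def using norm_ge_zero[of "Y 0"] by linarith
  have L: "0 \<le> L" and M: "0 \<le> M"
    using R k cb by (auto simp: L_def M_def intro!: add_nonneg_nonneg mult_nonneg_nonneg)
  define h where "h = 1 / (L + M + 1)"
  have h: "0 < h" "h * M \<le> 1" "h * L < 1"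
    using L M by (auto simp: h_def field_simps)
  text \<open>The step \<open>h\<close> of the Picard iteration does not depend on the starting time, so
    starting close enough to \<open>tB\<close> goes beyond it.\<close>
  define t0 where "t0 = max 0 (tB - h / 2)"
  have t0: "0 \<le> t0" "t0 < tB" "tB < t0 + h" using h tB by (auto simp: t0_def)
  have in_R: "norm x \<le> R" if "x \<in> cball (Y t0) 1" for x
    using norm_triangle_sub[of x "Y t0"] norm_Y[of t0] t0 that
    by (auto simp: R_def dist_norm norm_minus_commute)
  have "L-lipschitz_on (cball (Y t0) 1) (system_field n k cb)"
    using system_field_lipschitz[OF k in_R in_R] L by (auto intro!: lipschitz_onI simp: L_def dist_norm)
  moreover have "\<And>x. x \<in> cball (Y t0) 1 \<Longrightarrow> norm (system_field n k cb x) \<le> M"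
    using system_field_bounded[OF k cb in_R] by (simp add: M_def)
  ultimately obtain z where "z t0 = Y t0"
    and "\<And>t. t \<in> {t0..t0 + h} \<Longrightarrow>
      (z has_vector_derivative system_field n k cb (z t)) (at t within {t0..t0 + h})"
    using ode_local_solution_exists[of L "Y t0" 1 "system_field n k cb" M h t0] h by auto
  then have "\<exists>lam' rho'. is_solution n k cb rho0 lam0 (t0 + h) lam' rho'"
    by (intro solution_continuation[OF sol t0, of z]) (simp_all add: Y_def)
  then show ?thesis using t0 by auto
qed

section \<open>Real functions on a half-open interval\<close>

lemma increment_le_of_deriv_le:
  fixes f g :: "real \<Rightarrow> real"
  assumes "s \<le> t"
    and f: "\<And>x. x \<in> {s..t} \<Longrightarrow> (f has_real_derivative f' x) (at x)"
    and g: "\<And>x. x \<in> {s..t} \<Longrightarrow> (g has_real_derivative g' x) (at x)"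
    and le: "\<And>x. x \<in> {s..t} \<Longrightarrow> f' x \<le> g' x"
  shows "f t - f s \<le> g t - g s"
proof -
  have "g s - f s \<le> g t - f t"
  proof (rule DERIV_nonneg_imp_nondecreasing[OF \<open>s \<le> t\<close>])
    fix x assume "s \<le> x" "x \<le> t"
    then show "\<exists>y. ((\<lambda>x. g x - f x) has_real_derivative y) (at x) \<and> 0 \<le> y"
      using f g le by (intro exI[of _ "g' x - f' x"]) (auto intro: DERIV_diff)
  qed
  then show ?thesis by simp
qed

lemma mono_bounded_tendsto_at_left:
  fixes f :: "real \<Rightarrow> real"
  assumes "a < b"
    and mono: "\<And>s t. a \<le> s \<Longrightarrow> s \<le> t \<Longrightarrow> t < b \<Longrightarrow> f s \<le> f t"
    and bounded: "\<And>t. a \<le> t \<Longrightarrow> t < b \<Longrightarrow> f t \<le> B"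
  shows "\<exists>L. (f \<longlongrightarrow> L) (at_left b)"
proof -
  have "(f \<longlongrightarrow> Sup (f ` ({..<b} \<inter> {a..<b}))) (at b within ({..<b} \<inter> {a..<b}))"
    by (rule Lim_left_bound) (use mono bounded in auto)
  moreover have "at b within ({..<b} \<inter> {a..<b}) = at_left b"
    by (rule at_within_nhd[of _ "{a<..}"]) (use \<open>a < b\<close> in auto)
  ultimately show ?thesis by auto
qed

lemma has_real_derivative_powr_diff:
  "t < b \<Longrightarrow> ((\<lambda>s. (b - s) powr c) has_real_derivative - c * (b - t) powr (c - 1)) (at t)"
  by (auto intro!: derivative_eq_intros)

lemma upper_bound_of_second_deriv_le_powr:
  fixes f f' f'' :: "real \<Rightarrow> real"
  assumes c: "0 < c" "c < 1" and K: "0 \<le> K" and t: "a \<le> t" "t < b"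
    and f: "\<And>x. x \<in> {a..<b} \<Longrightarrow> (f has_real_derivative f' x) (at x)"
    and f': "\<And>x. x \<in> {a..<b} \<Longrightarrow> (f' has_real_derivative f'' x) (at x)"
    and f'': "\<And>x. x \<in> {a..<b} \<Longrightarrow> f'' x \<le> K * (b - x) powr (c - 2)"
  shows "f t \<le> f a + \<bar>f' a\<bar> * (b - a) + K / ((1 - c) * c) * (b - a) powr c"
proof -
  have f'_le: "f' x \<le> \<bar>f' a\<bar> + K / (1 - c) * (b - x) powr (c - 1)" if x: "x \<in> {a..<b}" for x
  proof -
    have "f' x - f' a \<le> K / (1 - c) * (b - x) powr (c - 1) - K / (1 - c) * (b - a) powr (c - 1)"
    proof (rule increment_le_of_deriv_le[where f' = f''])
      fix y assume "y \<in> {a..x}"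
      with x have "((\<lambda>y. K / (1 - c) * (b - y) powr (c - 1)) has_real_derivative
          K / (1 - c) * (- (c - 1) * (b - y) powr (c - 1 - 1))) (at y)"
        by (intro DERIV_cmult has_real_derivative_powr_diff) auto
      moreover have "K / (1 - c) * (- (c - 1) * (b - y) powr (c - 1 - 1)) = K * (b - y) powr (c - 2)"
        using c by (simp add: field_simps)
      ultimately show "((\<lambda>y. K / (1 - c) * (b - y) powr (c - 1)) has_real_derivative
          K * (b - y) powr (c - 2)) (at y)"
        by simp
    qed (use x f' f'' in auto)
    moreover have "0 \<le> K / (1 - c) * (b - a) powr (c - 1)" using K c by simp
    ultimately show ?thesis by linarith
  qed
  have "f t - f a \<le> (\<bar>f' a\<bar> * t - K / ((1 - c) * c) * (b - t) powr c)
      - (\<bar>f' a\<bar> * a - K / ((1 - c) * c) * (b - a) powr c)"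
  proof (rule increment_le_of_deriv_le[where f' = f'])
    fix y assume "y \<in> {a..t}"
    with t have "((\<lambda>y. \<bar>f' a\<bar> * y - K / ((1 - c) * c) * (b - y) powr c) has_real_derivative
        \<bar>f' a\<bar> * 1 - K / ((1 - c) * c) * (- c * (b - y) powr (c - 1))) (at y)"
      by (intro DERIV_diff DERIV_cmult DERIV_ident has_real_derivative_powr_diff) auto
    moreover have "\<bar>f' a\<bar> * 1 - K / ((1 - c) * c) * (- c * (b - y) powr (c - 1))
        = \<bar>f' a\<bar> + K / (1 - c) * (b - y) powr (c - 1)"
      using c by (simp add: field_simps)
    ultimately show "((\<lambda>y. \<bar>f' a\<bar> * y - K / ((1 - c) * c) * (b - y) powr c) has_real_derivative
        \<bar>f' a\<bar> + K / (1 - c) * (b - y) powr (c - 1)) (at y)"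
      by simp
  qed (use t f f'_le in auto)
  moreover have "\<bar>f' a\<bar> * (t - a) \<le> \<bar>f' a\<bar> * (b - a)" using t by (intro mult_left_mono) auto
  moreover have "0 \<le> K / ((1 - c) * c) * (b - t) powr c" using K c by simp
  ultimately show ?thesis by (simp add: algebra_simps)
qed

lemma tendsto_at_left_of_deriv_bounded_below:
  fixes f f' :: "real \<Rightarrow> real"
  assumes "a < b"
    and f: "\<And>x. x \<in> {a..<b} \<Longrightarrow> (f has_real_derivative f' x) (at x)"
    and f'_ge: "\<And>x. x \<in> {a..<b} \<Longrightarrow> - C \<le> f' x"
    and f_le: "\<And>x. x \<in> {a..<b} \<Longrightarrow> f x \<le> B"
  shows "\<exists>L. (f \<longlongrightarrow> L) (at_left b)"
proof -
  have "\<exists>L. ((\<lambda>x. f x + C * x) \<longlongrightarrow> L) (at_left b)"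
  proof (rule mono_bounded_tendsto_at_left[OF \<open>a < b\<close>])
    fix s t assume st: "a \<le> s" "s \<le> t" "t < b"
    have "(\<lambda>_. 0) t - (\<lambda>_. 0) s \<le> (f t + C * t) - (f s + C * s)"
    proof (rule increment_le_of_deriv_le[OF \<open>s \<le> t\<close>, where f' = "\<lambda>_. 0" and g' = "\<lambda>x. f' x + C"])
      fix x assume "x \<in> {s..t}"
      then have x: "x \<in> {a..<b}" using st by auto
      show "((\<lambda>x. f x + C * x) has_real_derivative f' x + C) (at x)"
        using f[OF x] by (auto intro!: derivative_eq_intros)
      show "0 \<le> f' x + C" using f'_ge[OF x] by simp
    qed simp
    then show "f s + C * s \<le> f t + C * t" by simp
  next
    fix t assume t: "a \<le> t" "t < b"
    have "C * t \<le> \<bar>C\<bar> * \<bar>t\<bar>" by (metis abs_ge_self abs_mult)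
    also have "\<dots> \<le> \<bar>C\<bar> * (\<bar>a\<bar> + \<bar>b\<bar>)" using t by (intro mult_left_mono) auto
    finally show "f t + C * t \<le> B + \<bar>C\<bar> * (\<bar>a\<bar> + \<bar>b\<bar>)" using f_le[of t] t by simp
  qed
  then obtain L where "((\<lambda>x. f x + C * x) \<longlongrightarrow> L) (at_left b)" by blast
  then have "((\<lambda>x. (f x + C * x) - C * x) \<longlongrightarrow> L - C * b) (at_left b)"
    by (intro tendsto_intros)
  then show ?thesis by auto
qed

lemma eventually_at_left_obtain:
  fixes b :: real
  assumes "eventually P (at_left b)" and "a < b"
  obtains t where "a < t" "t < b" "\<And>s. t \<le> s \<Longrightarrow> s < b \<Longrightarrow> P s"
proof -
  obtain c where "c < b" "\<And>s. c < s \<Longrightarrow> s < b \<Longrightarrow> P s"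
    using assms(1) unfolding eventually_at_left_field by blast
  then show ?thesis
    using assms(2) by (intro that[of "max ((c + b) / 2) ((a + b) / 2)"]) (auto simp: less_max_iff_disj)
qed

lemma bounded_of_eventually_bounded_at_left:
  fixes f :: "real \<Rightarrow> real"
  assumes "a < b" and cont: "continuous_on {a..<b} f"
    and ev: "eventually (\<lambda>t. \<bar>f t\<bar> \<le> C) (at_left b)"
  obtains B where "\<And>t. t \<in> {a..<b} \<Longrightarrow> \<bar>f t\<bar> \<le> B"
proof -
  obtain c where c: "a < c" "c < b" and late: "\<And>t. c \<le> t \<Longrightarrow> t < b \<Longrightarrow> \<bar>f t\<bar> \<le> C"
    using eventually_at_left_obtain[OF ev \<open>a < b\<close>] by blast
  have "continuous_on {a..c} f" by (rule continuous_on_subset[OF cont]) (use c in auto)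
  then obtain B where B: "\<And>t. t \<in> {a..c} \<Longrightarrow> norm (f t) \<le> B"
    using continuous_on_compact_bound[OF compact_Icc] by blast
  show ?thesis
  proof (rule that[of "max B C"])
    fix t assume "t \<in> {a..<b}"
    then show "\<bar>f t\<bar> \<le> max B C"
      using B[of t] late[of t] by (cases "t \<le> c") auto
  qed
qed

lemma absolutely_integrable_of_nonneg_deriv_tendsto:
  fixes f F :: "real \<Rightarrow> real"
  assumes "a < b"
    and F: "\<And>x. x \<in> {a<..<b} \<Longrightarrow> (F has_real_derivative f x) (at x)"
    and f: "continuous_on {a<..<b} f"
    and nonneg: "\<And>x. x \<in> {a<..<b} \<Longrightarrow> 0 \<le> f x"
    and Fa: "(F \<longlongrightarrow> A) (at_right a)" and Fb: "(F \<longlongrightarrow> B) (at_left b)"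
  shows "f absolutely_integrable_on {a<..<b}"
proof -
  have "set_integrable lborel (einterval (ereal a) (ereal b)) f"
  proof (rule interval_integral_FTC_nonneg)
    show "isCont f x" if "ereal a < ereal x" "ereal x < ereal b" for x
      using f that continuous_on_interior[of "{a<..<b}" f x] by simp
  qed (use assms in \<open>auto simp: ereal_tendsto_simps1\<close>)
  then show ?thesis
    unfolding set_integrable_def by (simp add: integrable_completion borel_measurable_integrable)
qed

lemma absolutely_integrable_of_signed_deriv_tendsto:
  fixes f F :: "real \<Rightarrow> real"
  assumes "a < b"
    and F: "\<And>x. x \<in> {a<..<b} \<Longrightarrow> (F has_real_derivative f x) (at x)"
    and f: "continuous_on {a<..<b} f"
    and sign: "(\<forall>x\<in>{a<..<b}. 0 \<le> f x) \<or> (\<forall>x\<in>{a<..<b}. f x \<le> 0)"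
    and Fa: "(F \<longlongrightarrow> A) (at_right a)" and Fb: "(F \<longlongrightarrow> B) (at_left b)"
  shows "f absolutely_integrable_on {a<..<b}"
  using sign
proof
  assume "\<forall>x\<in>{a<..<b}. 0 \<le> f x"
  then show ?thesis
    using absolutely_integrable_of_nonneg_deriv_tendsto[OF \<open>a < b\<close> F f _ Fa Fb] by blast
next
  assume "\<forall>x\<in>{a<..<b}. f x \<le> 0"
  then have "(\<lambda>x. - f x) absolutely_integrable_on {a<..<b}"
    using F f
    by (intro absolutely_integrable_of_nonneg_deriv_tendsto[OF \<open>a < b\<close> _ _ _
          tendsto_minus[OF Fa] tendsto_minus[OF Fb]]) (auto intro!: DERIV_minus continuous_intros)
  then show ?thesis
    using set_integrable_mult_right_iff[of "-1" lebesgue "{a<..<b}" f] by simp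
qed

lemma tangent_le_limit_at_left:
  fixes f f' :: "real \<Rightarrow> real"
  assumes "a < b"
    and f: "\<And>x. x \<in> {a..<b} \<Longrightarrow> (f has_real_derivative f' x) (at x)"
    and f'_ge: "\<And>x. x \<in> {a..<b} \<Longrightarrow> f' a \<le> f' x"
    and lim: "(f \<longlongrightarrow> l) (at_left b)"
  shows "f a + f' a * (b - a) \<le> l"
proof -
  have "f' a * s - f' a * a \<le> f s - f a" if "s \<in> {a..<b}" for s
    using that by (intro increment_le_of_deriv_le[where f' = "\<lambda>_. f' a" and g' = f'])
      (auto intro!: derivative_eq_intros f f'_ge)
  then have "eventually (\<lambda>s. 0 \<le> f s - f a - f' a * (s - a)) (at_left b)"
    unfolding eventually_at_left_field using \<open>a < b\<close>
    by (intro exI[of _ a]) (auto simp: algebra_simps)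
  moreover have "((\<lambda>s. f s - f a - f' a * (s - a)) \<longlongrightarrow> l - f a - f' a * (b - a)) (at_left b)"
    by (intro tendsto_intros lim)
  ultimately have "0 \<le> l - f a - f' a * (b - a)"
    by (intro tendsto_lowerbound[where F = "at_left b"]) (auto simp: trivial_limit_at_left_real)
  then show ?thesis by simp
qed

lemma absolutely_integrable_on_Ioo_of_tail:
  fixes f :: "real \<Rightarrow> real"
  assumes "continuous_on {a..<b} f" and "a \<le> c" "c < b"
    and "f absolutely_integrable_on {c<..<b}"
  shows "f absolutely_integrable_on {a<..<b}"
proof -
  have "f absolutely_integrable_on {a..c}"
    by (rule absolutely_integrable_continuous_real[OF continuous_on_subset[OF assms(1)]])
      (use assms in auto)
  then have "f absolutely_integrable_on ({a..c} \<union> {c<..<b})"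
    using assms(4) by (rule set_integrable_Un) auto
  then show ?thesis by (rule set_integrable_subset) auto
qed

section \<open>Solutions of the system\<close>

locale riccati_solution =
  fixes n :: nat and k cb rho0 tB :: real and lam0 :: "nat \<Rightarrow> real"
    and lam :: "nat \<Rightarrow> real \<Rightarrow> real" and rho :: "real \<Rightarrow> real"
  assumes n: "n \<ge> 2" and k: "k > 0" and cb: "cb > 0" and rho0: "rho0 > 0"
    and lam0_12: "lam0 1 < lam0 2" and lam0_mono: "\<forall>i\<in>{2..<n}. lam0 i \<le> lam0 (i + 1)"
    and sol: "is_solution n k cb rho0 lam0 tB lam rho" and tB: "0 < tB"
begin

definition Lam :: "nat \<Rightarrow> real \<Rightarrow> real" where
  "Lam i t = integral {0..t} (lam i)"

definition u :: "nat \<Rightarrow> real \<Rightarrow> real" where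
  "u i t = exp (Lam i t)"

definition du :: "nat \<Rightarrow> real \<Rightarrow> real" where
  "du i t = lam i t * u i t"

text \<open>Every \<open>u i\<close> solves the linear equation \<open>u'' = pot t * u\<close>.\<close>

definition pot :: "real \<Rightarrow> real" where
  "pot t = k / real n * (rho t - cb)"

lemma one_mem: "1 \<in> {1..n}" and n_mem: "n \<in> {1..n}"
  using n by auto

lemma eventually_at_left_interior: "eventually (\<lambda>t. t \<in> {0<..<tB}) (at_left tB)"
  unfolding eventually_at_left_field using tB by (intro exI[of _ 0]) auto

lemma at_within_interior: "t \<in> {0<..<tB} \<Longrightarrow> at t within {0..<tB} = at t"
  by (rule at_within_open_subset[of t "{0<..<tB}"]) auto

lemma lam_has_derivative_within: "t \<in> {0..<tB} \<Longrightarrow> i \<in> {1..n} \<Longrightarrow>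
    (lam i has_real_derivative (pot t - lam i t * lam i t)) (at t within {0..<tB})"
  using sol unfolding is_solution_def pot_def by blast

lemma rho_has_derivative_within: "t \<in> {0..<tB} \<Longrightarrow>
    (rho has_real_derivative (- rho t * (\<Sum>i=1..n. lam i t))) (at t within {0..<tB})"
  using sol unfolding is_solution_def by blast

lemma lam_has_derivative: "t \<in> {0<..<tB} \<Longrightarrow> i \<in> {1..n} \<Longrightarrow>
    (lam i has_real_derivative (pot t - lam i t * lam i t)) (at t)"
  using lam_has_derivative_within[of t i] at_within_interior[of t] by auto

lemma rho_has_derivative: "t \<in> {0<..<tB} \<Longrightarrow>
    (rho has_real_derivative (- rho t * (\<Sum>i=1..n. lam i t))) (at t)"
  using rho_has_derivative_within[of t] at_within_interior[of t] by auto

lemma continuous_on_lam: "i \<in> {1..n} \<Longrightarrow> continuous_on {0..<tB} (lam i)"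
  unfolding continuous_on_eq_continuous_within using lam_has_derivative_within DERIV_continuous by blast

lemma continuous_on_rho: "continuous_on {0..<tB} rho"
  unfolding continuous_on_eq_continuous_within using rho_has_derivative_within DERIV_continuous by blast

lemma lam_0: "i \<in> {1..n} \<Longrightarrow> lam i 0 = lam0 i" and rho_0: "rho 0 = rho0"
  using sol unfolding is_solution_def by auto

lemma Lam_has_derivative_within:
  assumes t: "t \<in> {0..<tB}" and i: "i \<in> {1..n}"
  shows "(Lam i has_real_derivative lam i t) (at t within {0..<tB})"
proof -
  define b where "b = (t + tB) / 2"
  have b: "t < b" "b < tB" using t by (auto simp: b_def)
  have "continuous_on {0..b} (lam i)"
    by (rule continuous_on_subset[OF continuous_on_lam[OF i]]) (use b in auto)
  then have "((\<lambda>u. integral {0..u} (lam i)) has_vector_derivative lam i t) (at t within {0..b})"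
    by (rule integral_has_vector_derivative) (use t b in auto)
  moreover have "at t within {0..<tB} = at t within {0..b}"
    by (rule at_within_nhd[of t "{..<b}"]) (use t b in auto)
  ultimately show ?thesis
    unfolding has_real_derivative_iff_has_vector_derivative Lam_def[abs_def] by simp
qed

lemma Lam_has_derivative: "t \<in> {0<..<tB} \<Longrightarrow> i \<in> {1..n} \<Longrightarrow> (Lam i has_real_derivative lam i t) (at t)"
  using Lam_has_derivative_within[of t i] at_within_interior[of t] by auto

lemma continuous_on_Lam: "i \<in> {1..n} \<Longrightarrow> continuous_on {0..<tB} (Lam i)"
  unfolding continuous_on_eq_continuous_within using Lam_has_derivative_within DERIV_continuous by blast

lemma Lam_0 [simp]: "Lam i 0 = 0" and u_0 [simp]: "u i 0 = 1" and u_pos: "0 < u i t"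
  by (simp_all add: Lam_def u_def)

lemma u_has_derivative: "t \<in> {0<..<tB} \<Longrightarrow> i \<in> {1..n} \<Longrightarrow> (u i has_real_derivative du i t) (at t)"
  unfolding u_def[abs_def] du_def using DERIV_fun_exp[OF Lam_has_derivative, of t i]
  by (simp add: mult.commute)

lemma continuous_on_u: "i \<in> {1..n} \<Longrightarrow> continuous_on {0..<tB} (u i)"
  unfolding u_def[abs_def] by (intro continuous_on_exp continuous_on_Lam)

lemma du_has_derivative: "t \<in> {0<..<tB} \<Longrightarrow> i \<in> {1..n} \<Longrightarrow> (du i has_real_derivative pot t * u i t) (at t)"
  unfolding du_def[abs_def]
  by (rule DERIV_cong[OF DERIV_mult[OF lam_has_derivative u_has_derivative]]) (auto simp: du_def algebra_simps)

lemma continuous_on_du: "i \<in> {1..n} \<Longrightarrow> continuous_on {0..<tB} (du i)"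
  unfolding du_def[abs_def] by (intro continuous_intros continuous_on_lam continuous_on_u)

lemma eq_at_0_of_deriv_zero:
  fixes g :: "real \<Rightarrow> real"
  assumes "continuous_on {0..<tB} g" "\<And>t. t \<in> {0<..<tB} \<Longrightarrow> (g has_real_derivative 0) (at t)"
    and "t \<in> {0..<tB}"
  shows "g t = g 0"
proof (cases "t = 0")
  case False
  then have t: "0 < t" "t < tB" using assms(3) by auto
  show ?thesis
  proof (rule DERIV_isconst_end[OF t(1)])
    show "continuous_on {0..t} g" by (rule continuous_on_subset[OF assms(1)]) (use t in auto)
  qed (use assms(2) t in auto)
qed simp

text \<open>The Wronskian \<open>u\<^sub>i u\<^sub>j' - u\<^sub>i' u\<^sub>j\<close> of two solutions of \<open>u'' = pot t * u\<close> is constant.\<close>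

lemma wronskian:
  assumes i: "i \<in> {1..n}" and j: "j \<in> {1..n}" and t: "t \<in> {0..<tB}"
  shows "u i t * u j t * (lam j t - lam i t) = lam0 j - lam0 i"
proof -
  define g where "g s = u i s * du j s - du i s * u j s" for s
  have "g t = g 0"
  proof (rule eq_at_0_of_deriv_zero[OF _ _ t])
    show "continuous_on {0..<tB} g"
      unfolding g_def using i j by (intro continuous_intros continuous_on_u continuous_on_du)
    fix s assume s: "s \<in> {0<..<tB}"
    show "(g has_real_derivative 0) (at s)"
      unfolding g_def[abs_def]
      by (rule DERIV_cong[OF DERIV_diff[OF DERIV_mult[OF u_has_derivative du_has_derivative]
            DERIV_mult[OF du_has_derivative u_has_derivative]]]) (use s i j in auto)
  qed
  then show ?thesis using lam_0[OF i] lam_0[OF j] by (simp add: g_def du_def algebra_simps)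
qed

lemma rho_mult_prod_u:
  assumes t: "t \<in> {0..<tB}"
  shows "rho t * (\<Prod>j=1..n. u j t) = rho0"
proof -
  define g where "g s = rho s * exp (\<Sum>j=1..n. Lam j s)" for s
  have "g t = g 0"
  proof (rule eq_at_0_of_deriv_zero[OF _ _ t])
    show "continuous_on {0..<tB} g"
      unfolding g_def using continuous_on_rho continuous_on_Lam by (intro continuous_intros) auto
    fix s assume s: "s \<in> {0<..<tB}"
    have "((\<lambda>s. \<Sum>j=1..n. Lam j s) has_real_derivative (\<Sum>j=1..n. lam j s)) (at s)"
      by (rule DERIV_sum) (use Lam_has_derivative s in auto)
    from DERIV_mult[OF rho_has_derivative[OF s] DERIV_fun_exp[OF this]]
    show "(g has_real_derivative 0) (at s)"
      unfolding g_def[abs_def] by (rule DERIV_cong) (simp add: algebra_simps)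
  qed
  then show ?thesis using rho_0 by (simp add: g_def u_def exp_sum)
qed

lemma rho_pos: "t \<in> {0..<tB} \<Longrightarrow> 0 < rho t"
  using rho_mult_prod_u[of t] rho0 prod_pos[of "{1..n}" "\<lambda>j. u j t"] u_pos
  by (metis zero_less_mult_pos2)

lemma lam0_mono_le:
  assumes "2 \<le> i" "i \<le> j" "j \<le> n"
  shows "lam0 i \<le> lam0 j"
  using assms(2,3)
proof (induction rule: dec_induct)
  case (step m)
  then have "lam0 m \<le> lam0 (m + 1)" using lam0_mono assms(1) by auto
  with step show ?case by simp
qed simp

lemma lam0_1_less: "i \<in> {2..n} \<Longrightarrow> lam0 1 < lam0 i"
  using lam0_12 lam0_mono_le[of 2 i] by fastforce

lemma lam0_1_le: "i \<in> {1..n} \<Longrightarrow> lam0 1 \<le> lam0 i"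
  using lam0_1_less[of i] by (cases "i = 1") auto

lemma lam0_le_n: "i \<in> {1..n} \<Longrightarrow> lam0 i \<le> lam0 n"
  using lam0_mono_le[of i n] lam0_1_less[of n] n by (cases "i = 1") auto

lemma lam0_1_less_n: "lam0 1 < lam0 n"
  using lam0_1_less[of n] n by simp

lemma lam_1_le:
  assumes "t \<in> {0..<tB}" "i \<in> {1..n}"
  shows "lam 1 t \<le> lam i t"
proof -
  have "0 \<le> u 1 t * u i t * (lam i t - lam 1 t)"
    using wronskian[OF one_mem assms(2,1)] lam0_1_le[OF assms(2)] by simp
  moreover have "0 < u 1 t * u i t" using u_pos by simp
  ultimately show ?thesis by (simp add: zero_le_mult_iff)
qed

lemma lam_le_n:
  assumes "t \<in> {0..<tB}" "i \<in> {1..n}"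
  shows "lam i t \<le> lam n t"
proof -
  have "0 \<le> u i t * u n t * (lam n t - lam i t)"
    using wronskian[OF assms(2) n_mem assms(1)] lam0_le_n[OF assms(2)] by simp
  moreover have "0 < u i t * u n t" using u_pos by simp
  ultimately show ?thesis by (simp add: zero_le_mult_iff)
qed

text \<open>Since all \<open>u i\<close> solve the same second order linear equation, each of them is a
  combination of \<open>u 1\<close> and \<open>u n\<close>.\<close>

lemma u_decomp:
  assumes "t \<in> {0..<tB}" "i \<in> {1..n}"
  shows "(lam0 n - lam0 1) * u i t = (lam0 i - lam0 1) * u n t + (lam0 n - lam0 i) * u 1 t"
proof -
  have "lam0 i - lam0 1 = u 1 t * u i t * (lam i t - lam 1 t)"
    and "lam0 n - lam0 i = u i t * u n t * (lam n t - lam i t)"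
    and "lam0 n - lam0 1 = u 1 t * u n t * (lam n t - lam 1 t)"
    using wronskian[OF one_mem assms(2,1)] wronskian[OF assms(2) n_mem assms(1)]
      wronskian[OF one_mem n_mem assms(1)] by simp_all
  then show ?thesis by (simp only:) (simp add: algebra_simps)
qed

lemma u_le_u_1_add_u_n:
  assumes "t \<in> {0..<tB}" "i \<in> {1..n}"
  shows "u i t \<le> u 1 t + u n t"
proof -
  have "(lam0 i - lam0 1) * u n t \<le> (lam0 n - lam0 1) * u n t"
    and "(lam0 n - lam0 i) * u 1 t \<le> (lam0 n - lam0 1) * u 1 t"
    using lam0_1_le[OF assms(2)] lam0_le_n[OF assms(2)] u_pos
    by (auto intro!: mult_right_mono less_imp_le)
  then have "(lam0 n - lam0 1) * u i t \<le> (lam0 n - lam0 1) * (u 1 t + u n t)"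
    using u_decomp[OF assms] by (simp add: algebra_simps)
  then show ?thesis using lam0_1_less_n by simp
qed

definition beta :: "nat \<Rightarrow> real" where
  "beta i = (lam0 i - lam0 1) / (lam0 n - lam0 1)"

lemma beta_pos: "i \<in> {2..n} \<Longrightarrow> 0 < beta i"
  using lam0_1_less lam0_1_less_n by (simp add: beta_def)

lemma beta_mult_u_n_le:
  assumes "t \<in> {0..<tB}" "i \<in> {2..n}"
  shows "beta i * u n t \<le> u i t"
proof -
  have i: "i \<in> {1..n}" using assms(2) by auto
  have "0 \<le> (lam0 n - lam0 i) * u 1 t"
    using lam0_le_n[OF i] u_pos[of 1 t] by simp
  then have "(lam0 i - lam0 1) * u n t \<le> (lam0 n - lam0 1) * u i t"
    using u_decomp[OF assms(1) i] by linarith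
  then show ?thesis using lam0_1_less_n by (simp add: beta_def field_simps)
qed

lemma continues_if_lam_bounded:
  assumes bounded: "\<And>t. t \<in> {0..<tB} \<Longrightarrow> \<bar>lam 1 t\<bar> \<le> B \<and> \<bar>lam n t\<bar> \<le> B"
  shows "\<exists>T>tB. \<exists>lam' rho'. is_solution n k cb rho0 lam0 T lam' rho'"
proof (rule bounded_solution_continues[OF sol tB])
  have lam_bounded: "\<bar>lam i t\<bar> \<le> B" if "t \<in> {0..<tB}" "i \<in> {1..n}" for t i
    using lam_1_le[OF that] lam_le_n[OF that] bounded[OF that(1)] by (auto simp: abs_le_iff)
  then show "\<bar>lam i t\<bar> \<le> B + rho0 * exp (real n * (B * tB))"
    if "t \<in> {0..<tB}" "i \<in> {1..n}" for t i
    using lam_bounded[OF that] rho0 by (simp add: add_increasing2 less_imp_le)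
  show "\<bar>rho t\<bar> \<le> B + rho0 * exp (real n * (B * tB))" if t: "t \<in> {0..<tB}" for t
  proof -
    have "\<bar>Lam j t\<bar> \<le> B * tB" if "j \<in> {1..n}" for j
    proof -
      have "continuous_on {0..t} (lam j)"
        by (rule continuous_on_subset[OF continuous_on_lam[OF that]]) (use t in auto)
      then have "norm (integral {0..t} (lam j)) \<le> B * (t - 0)"
        using t lam_bounded[OF _ that] by (intro integral_bound) auto
      moreover have "B * t \<le> B * tB" using t lam_bounded[of 0 j] that tB by (intro mult_left_mono) auto
      ultimately show ?thesis by (simp add: Lam_def)
    qed
    then have "\<bar>\<Sum>j=1..n. Lam j t\<bar> \<le> real n * (B * tB)"
      by (rule abs_sum_le_card_mult)
    then have "- (\<Sum>j=1..n. Lam j t) \<le> real n * (B * tB)"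
      by (simp add: abs_le_iff)
    moreover have "rho t = rho0 * exp (- (\<Sum>j=1..n. Lam j t))"
      using rho_mult_prod_u[OF t] by (simp add: u_def exp_sum exp_minus field_simps)
    moreover have "0 \<le> B" using bounded[of 0] tB by auto
    ultimately show ?thesis
      using rho_pos[OF t] rho0 by (simp add: add_increasing)
  qed
qed (use k cb in auto)

lemma prod_u_tendsto_0:
  assumes u_1: "(u 1 \<longlongrightarrow> 0) (at_left tB)" and u_n: "(u n \<longlongrightarrow> l) (at_left tB)"
  shows "((\<lambda>t. \<Prod>j=1..n. u j t) \<longlongrightarrow> 0) (at_left tB)"
proof (rule tendsto_sandwich[OF _ _ tendsto_const])
  show "eventually (\<lambda>t. 0 \<le> (\<Prod>j=1..n. u j t)) (at_left tB)"
    by (intro always_eventually allI prod_nonneg) (auto intro: less_imp_le u_pos)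
  show "eventually (\<lambda>t. (\<Prod>j=1..n. u j t) \<le> u 1 t * (u 1 t + u n t) ^ (n - 1)) (at_left tB)"
    using eventually_at_left_interior
  proof eventually_elim
    case (elim t)
    then have elim: "t \<in> {0..<tB}" by simp
    have "(\<Prod>j=1..n. u j t) = u 1 t * (\<Prod>j=2..n. u j t)"
      using prod.atLeast_Suc_atMost[of 1 n "\<lambda>j. u j t"] n by (simp add: numeral_2_eq_2)
    also have "(\<Prod>j=2..n. u j t) \<le> (\<Prod>j=2..n. u 1 t + u n t)"
      by (intro prod_mono) (use u_le_u_1_add_u_n[OF elim] in \<open>auto intro: less_imp_le u_pos\<close>)
    then have "u 1 t * (\<Prod>j=2..n. u j t) \<le> u 1 t * (u 1 t + u n t) ^ (n - 1)"
      using u_pos[of 1 t] by (simp add: mult_left_mono)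
    finally show ?case .
  qed
  have "((\<lambda>t. u 1 t * (u 1 t + u n t) ^ (n - 1)) \<longlongrightarrow> 0 * (0 + l) ^ (n - 1)) (at_left tB)"
    by (intro tendsto_intros u_1 u_n)
  then show "((\<lambda>t. u 1 t * (u 1 t + u n t) ^ (n - 1)) \<longlongrightarrow> 0) (at_left tB)" by simp
qed

lemma pot_eventually_pos_if_prod_u_tendsto_0:
  assumes "((\<lambda>t. \<Prod>j=1..n. u j t) \<longlongrightarrow> 0) (at_left tB)"
  shows "eventually (\<lambda>t. 0 < pot t) (at_left tB)"
proof -
  have "eventually (\<lambda>t. (\<Prod>j=1..n. u j t) < rho0 / cb \<and> t \<in> {0..<tB}) (at_left tB)"
    using order_tendstoD(2)[OF assms, of "rho0 / cb"] rho0 cb tB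
    by (auto simp: eventually_conj_iff eventually_at_left_field intro: exI[of _ 0])
  then show ?thesis
  proof (rule eventually_mono)
    fix t assume t: "(\<Prod>j=1..n. u j t) < rho0 / cb \<and> t \<in> {0..<tB}"
    have "0 < (\<Prod>j=1..n. u j t)" by (rule prod_pos) (use u_pos in auto)
    then have "cb < rho0 / (\<Prod>j=1..n. u j t)"
      using t cb by (simp add: pos_less_divide_eq mult.commute)
    also have "rho0 / (\<Prod>j=1..n. u j t) = rho t"
      unfolding rho_mult_prod_u[OF conjunct2[OF t], symmetric]
      using \<open>0 < (\<Prod>j=1..n. u j t)\<close> by (metis less_irrefl nonzero_mult_div_cancel_right)
    finally show "0 < pot t" using k n by (simp add: pot_def)
  qed
qed

lemma du_eventually_mono:
  assumes "eventually (\<lambda>t. 0 < pot t) (at_left tB)" and i: "i \<in> {1..n}"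
  obtains t1 where "0 < t1" "t1 < tB" "\<And>s t. t1 \<le> s \<Longrightarrow> s \<le> t \<Longrightarrow> t < tB \<Longrightarrow> du i s \<le> du i t"
proof -
  obtain t1 where t1: "0 < t1" "t1 < tB" and pos: "\<And>t. t1 \<le> t \<Longrightarrow> t < tB \<Longrightarrow> 0 < pot t"
    using eventually_at_left_obtain[OF assms(1) tB] by blast
  show ?thesis
  proof (rule that[OF t1])
    fix s t assume st: "t1 \<le> s" "s \<le> t" "t < tB"
    show "du i s \<le> du i t"
    proof (rule DERIV_nonneg_imp_nondecreasing[OF st(2)])
      fix x assume "s \<le> x" "x \<le> t"
      with st t1 have "x \<in> {0<..<tB}" "0 < pot x" using pos by auto
      with du_has_derivative[OF _ i] u_pos[of i x]
      show "\<exists>y. (du i has_real_derivative y) (at x) \<and> 0 \<le> y" by (auto intro!: exI)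
    qed
  qed
qed

end

section \<open>Blow-up at \<open>tB\<close>\<close>

locale riccati_blowup = riccati_solution +
  fixes p q :: real
  assumes maximal: "\<not> (\<exists>T>tB. \<exists>lam' rho'. is_solution n k cb rho0 lam0 T lam' rho')"
    and lim_1: "((\<lambda>t. du 1 t * u n t) \<longlongrightarrow> - p) (at_left tB)"
    and lim_n: "((\<lambda>t. u 1 t * du n t) \<longlongrightarrow> q) (at_left tB)"
    and pq: "q < p"
    and xi1: "(- p / (p - q))\<^sup>2 + (- p / (p - q)) = 0"
begin

text \<open>The Wronskian of \<open>u 1\<close> and \<open>u n\<close> forces \<open>q + p = lam0 n - lam0 1 > 0\<close>,
  so of the two roots of \<open>\<xi>\<^sup>2 + \<xi> = 0\<close> only \<open>-p / (p - q) = -1\<close> is possible.\<close>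

lemma q_eq_0: "q = 0" and p_eq: "p = lam0 n - lam0 1"
proof -
  have "eventually (\<lambda>t. u 1 t * du n t - du 1 t * u n t = lam0 n - lam0 1) (at_left tB)"
    using eventually_at_left_interior
    by eventually_elim (use wronskian[OF one_mem n_mem] in \<open>auto simp: du_def algebra_simps\<close>)
  then have "((\<lambda>t. lam0 n - lam0 1) \<longlongrightarrow> q - - p) (at_left tB)"
    by (rule Lim_transform_eventually[OF tendsto_diff[OF lim_n lim_1]])
  then have sum: "q + p = lam0 n - lam0 1" by (simp add: tendsto_const_iff)
  define x where "x = - p / (p - q)"
  have "x * (x + 1) = 0" using xi1 by (simp add: x_def power2_eq_square algebra_simps)
  then have "x = 0 \<or> x = -1" by (simp add: add_eq_0_iff)
  moreover have "x = 0 \<Longrightarrow> p = 0" and "x = -1 \<Longrightarrow> q = 0"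
    using pq by (auto simp: x_def field_simps)
  ultimately have "p = 0 \<or> q = 0" by blast
  moreover have "p \<noteq> 0" using sum lam0_1_less_n pq by auto
  ultimately show "q = 0" by auto
  with sum show "p = lam0 n - lam0 1" by simp
qed

lemma p_pos: "0 < p"
  using p_eq lam0_1_less_n by simp

definition u1n :: "real \<Rightarrow> real" where
  "u1n t = u 1 t * u n t"

lemma u1n_pos: "0 < u1n t"
  by (simp add: u1n_def u_pos)

lemma u1n_has_derivative:
  "t \<in> {0<..<tB} \<Longrightarrow> (u1n has_real_derivative (lam 1 t + lam n t) * u1n t) (at t)"
  unfolding u1n_def[abs_def]
  by (rule DERIV_cong[OF DERIV_mult[OF u_has_derivative[OF _ one_mem] u_has_derivative[OF _ n_mem]]])
    (auto simp: du_def algebra_simps)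

lemma lam_1_u1n_tendsto: "((\<lambda>t. lam 1 t * u1n t) \<longlongrightarrow> - p) (at_left tB)"
  using lim_1 by (simp add: u1n_def du_def mult.assoc)

lemma lam_n_u1n_tendsto: "((\<lambda>t. lam n t * u1n t) \<longlongrightarrow> 0) (at_left tB)"
  using lim_n q_eq_0 by (simp add: u1n_def du_def mult_ac)

lemma lam_bounded_if_u1n_bounded_below:
  assumes "0 < \<epsilon>" and ev: "eventually (\<lambda>t. \<epsilon> \<le> u1n t) (at_left tB)"
  obtains B where "\<And>t. t \<in> {0..<tB} \<Longrightarrow> \<bar>lam 1 t\<bar> \<le> B \<and> \<bar>lam n t\<bar> \<le> B"
proof -
  have bound_of_product: "eventually (\<lambda>t. \<bar>lam i t\<bar> \<le> (p + 1) / \<epsilon>) (at_left tB)"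
    if lim: "((\<lambda>t. lam i t * u1n t) \<longlongrightarrow> c) (at_left tB)" and c: "\<bar>c\<bar> \<le> p" for i c
  proof -
    have "eventually (\<lambda>t. dist (lam i t * u1n t) c < 1) (at_left tB)"
      using tendstoD[OF lim, of 1] by simp
    with ev show ?thesis
    proof eventually_elim
      case (elim t)
      then have "\<bar>lam i t\<bar> * \<epsilon> \<le> \<bar>lam i t\<bar> * u1n t" by (intro mult_left_mono) auto
      also have "\<dots> = \<bar>lam i t * u1n t\<bar>" using u1n_pos[of t] by (simp add: abs_mult)
      also have "\<dots> \<le> p + 1" using elim c by (auto simp: dist_real_def)
      finally show ?case using \<open>0 < \<epsilon>\<close> by (simp add: pos_le_divide_eq)
    qed
  qed
  obtain B1 where B1: "\<And>t. t \<in> {0..<tB} \<Longrightarrow> \<bar>lam 1 t\<bar> \<le> B1"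
    using bounded_of_eventually_bounded_at_left[OF tB continuous_on_lam[OF one_mem]
        bound_of_product[OF lam_1_u1n_tendsto]] p_pos by force
  obtain Bn where Bn: "\<And>t. t \<in> {0..<tB} \<Longrightarrow> \<bar>lam n t\<bar> \<le> Bn"
    using bounded_of_eventually_bounded_at_left[OF tB continuous_on_lam[OF n_mem]
        bound_of_product[OF lam_n_u1n_tendsto]] p_pos by force
  show ?thesis
    by (rule that[of "max B1 Bn"]) (use B1 Bn in fastforce)
qed

text \<open>This is where the maximality of the existence interval enters.\<close>

lemma u1n_tendsto_0: "(u1n \<longlongrightarrow> 0) (at_left tB)"
proof -
  have "eventually (\<lambda>t. (lam 1 t + lam n t) * u1n t < 0) (at_left tB)"
    using tendsto_add[OF lam_1_u1n_tendsto lam_n_u1n_tendsto] p_pos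
    by (intro order_tendstoD(2)[where y = "- p + 0"]) (simp_all add: algebra_simps)
  then obtain t1 where t1: "0 < t1" "t1 < tB"
    and neg: "\<And>t. t1 \<le> t \<Longrightarrow> t < tB \<Longrightarrow> (lam 1 t + lam n t) * u1n t < 0"
    using eventually_at_left_obtain tB by blast
  have "\<exists>L. ((\<lambda>t. - u1n t) \<longlongrightarrow> L) (at_left tB)"
  proof (rule mono_bounded_tendsto_at_left[OF t1(2)])
    fix s t assume st: "t1 \<le> s" "s \<le> t" "t < tB"
    have "u1n t \<le> u1n s"
    proof (rule DERIV_nonpos_imp_nonincreasing[OF st(2)])
      fix x assume "s \<le> x" "x \<le> t"
      with st t1 have "x \<in> {0<..<tB}" "t1 \<le> x" "x < tB" by auto
      with u1n_has_derivative neg less_imp_le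
      show "\<exists>y. (u1n has_real_derivative y) (at x) \<and> y \<le> 0" by blast
    qed
    then show "- u1n s \<le> - u1n t" by simp
  next
    show "- u1n t \<le> 0" for t using u1n_pos[of t] by simp
  qed
  then obtain L where L: "(u1n \<longlongrightarrow> L) (at_left tB)"
    using tendsto_minus[where f = "\<lambda>t. - u1n t"] by fastforce
  have "0 \<le> L"
    by (rule tendsto_lowerbound[OF L]) (auto intro: always_eventually less_imp_le u1n_pos)
  moreover have "L \<le> 0"
  proof (rule ccontr)
    assume "\<not> L \<le> 0"
    then have "eventually (\<lambda>t. L / 2 \<le> u1n t) (at_left tB)"
      using order_tendstoD(1)[OF L, of "L / 2"] by (auto elim: eventually_mono)
    moreover have "0 < L / 2" using \<open>\<not> L \<le> 0\<close> by simp
    ultimately obtain B where "\<And>t. t \<in> {0..<tB} \<Longrightarrow> \<bar>lam 1 t\<bar> \<le> B \<and> \<bar>lam n t\<bar> \<le> B"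
      using lam_bounded_if_u1n_bounded_below by blast
    then show False using continues_if_lam_bounded maximal by blast
  qed
  ultimately show ?thesis using L by simp
qed

lemma u1n_div_tendsto: "((\<lambda>t. u1n t / (tB - t)) \<longlongrightarrow> p) (at_left tB)"
proof (rule lhopital_left[where f' = "\<lambda>t. (lam 1 t + lam n t) * u1n t" and g' = "\<lambda>t. -1"])
  show "((\<lambda>t. tB - t) \<longlongrightarrow> 0) (at_left tB)"
    using tendsto_diff[OF tendsto_const tendsto_ident_at, of tB tB "{..<tB}"] by simp
  show "eventually (\<lambda>t. (u1n has_real_derivative (lam 1 t + lam n t) * u1n t) (at t)) (at_left tB)"
    using eventually_at_left_interior by eventually_elim (rule u1n_has_derivative)
  have "((\<lambda>t. - (lam 1 t * u1n t + lam n t * u1n t)) \<longlongrightarrow> - (- p + 0)) (at_left tB)"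
    by (intro tendsto_minus tendsto_add lam_1_u1n_tendsto lam_n_u1n_tendsto)
  then show "((\<lambda>t. (lam 1 t + lam n t) * u1n t / -1) \<longlongrightarrow> p) (at_left tB)"
    by (simp add: algebra_simps)
  show "eventually (\<lambda>t. ((\<lambda>t. tB - t) has_real_derivative -1) (at t)) (at_left tB)"
    by (intro always_eventually allI) (auto intro!: derivative_eq_intros)
  show "eventually (\<lambda>t. tB - t \<noteq> 0) (at_left tB)"
    using eventually_at_left_interior by eventually_elim auto
qed (simp_all add: u1n_tendsto_0)

lemma lam_n_tau_tendsto: "((\<lambda>t. lam n t * (tB - t)) \<longlongrightarrow> 0) (at_left tB)"
proof -
  have "((\<lambda>t. lam n t * u1n t * inverse (u1n t / (tB - t))) \<longlongrightarrow> 0 * inverse p) (at_left tB)"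
    using p_pos by (intro tendsto_intros lam_n_u1n_tendsto u1n_div_tendsto) auto
  moreover have "eventually (\<lambda>t. lam n t * u1n t * inverse (u1n t / (tB - t))
      = lam n t * (tB - t)) (at_left tB)"
  proof (rule eventually_mono[OF eventually_at_left_interior])
    fix t
    have "u1n t \<noteq> 0" using u1n_pos[of t] by simp
    then show "lam n t * u1n t * inverse (u1n t / (tB - t)) = lam n t * (tB - t)"
      by (simp add: field_simps)
  qed
  ultimately show ?thesis
    by (auto intro: Lim_transform_eventually)
qed

lemma rho_u_n_le:
  assumes t: "t \<in> {0..<tB}"
  shows "rho t * u n t \<le> rho0 / (\<Prod>j=2..n. beta j) * exp (- Lam 1 t - (real n - 2) * Lam n t)"
proof -
  have beta_prod: "0 < (\<Prod>j=2..n. beta j)" by (rule prod_pos) (use beta_pos in auto)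
  have "(\<Prod>j=1..n. u j t) = u 1 t * (\<Prod>j=2..n. u j t)"
    using prod.atLeast_Suc_atMost[of 1 n "\<lambda>j. u j t"] n by (simp add: numeral_2_eq_2)
  also have "(\<Prod>j=2..n. u j t) \<ge> (\<Prod>j=2..n. beta j * u n t)"
    using beta_mult_u_n_le[OF t] beta_pos u_pos by (intro prod_mono) (auto intro: less_imp_le)
  then have "u 1 t * (\<Prod>j=2..n. u j t) \<ge> u 1 t * ((\<Prod>j=2..n. beta j) * u n t ^ (n - 1))"
    using u_pos[of 1 t] by (simp add: prod.distrib)
  finally have prod_ge: "u 1 t * (\<Prod>j=2..n. beta j) * u n t ^ (n - 1) \<le> (\<Prod>j=1..n. u j t)"
    by (simp add: mult_ac)
  have "(\<Prod>j=1..n. u j t) \<noteq> 0"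
    using prod_pos[of "{1..n}" "\<lambda>j. u j t"] u_pos by (metis less_irrefl)
  then have "rho t * u n t = rho0 * u n t / (\<Prod>j=1..n. u j t)"
    unfolding rho_mult_prod_u[OF t, symmetric] by simp
  also have "\<dots> \<le> rho0 * u n t / (u 1 t * (\<Prod>j=2..n. beta j) * u n t ^ (n - 1))"
  proof (rule divide_left_mono[OF prod_ge])
    show "0 \<le> rho0 * u n t" using rho0 u_pos[of n t] by simp
    have "0 < u 1 t * (\<Prod>j=2..n. beta j) * u n t ^ (n - 1)" using u_pos beta_prod by simp
    then show "0 < (\<Prod>j=1..n. u j t) * (u 1 t * (\<Prod>j=2..n. beta j) * u n t ^ (n - 1))"
      using prod_pos[of "{1..n}" "\<lambda>j. u j t"] u_pos by simp
  qed
  also have "\<dots> = rho0 / (\<Prod>j=2..n. beta j) * (u n t / (u 1 t * u n t ^ (n - 1)))"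
    by (simp add: field_simps)
  also have "u n t / (u 1 t * u n t ^ (n - 1)) = exp (- Lam 1 t - (real n - 2) * Lam n t)"
  proof -
    have "u n t ^ (n - 1) = exp (real (n - 1) * Lam n t)" by (simp add: u_def exp_of_nat_mult)
    moreover have "real (n - 1) = real n - 1" using n by simp
    ultimately show ?thesis by (simp add: u_def exp_diff exp_add[symmetric] algebra_simps)
  qed
  finally show ?thesis .
qed

lemma Lam_n_growth:
  assumes t0: "0 < t0" and t: "t0 \<le> t" "t < tB"
    and small: "\<And>s. s \<in> {t0..<tB} \<Longrightarrow> \<bar>lam n s * (tB - s)\<bar> \<le> 1 / (4 * real n)"
  shows "- (real n - 3) * Lam n t \<le> - (real n - 3) * Lam n t0 + (ln (tB - t0) - ln (tB - t)) / 4"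
proof -
  have "- (real n - 3) * Lam n t - - (real n - 3) * Lam n t0
      \<le> - ln (tB - t) / 4 - - ln (tB - t0) / 4"
  proof (rule increment_le_of_deriv_le[OF t(1)])
    fix x assume x: "x \<in> {t0..t}"
    then have x_in: "x \<in> {0<..<tB}" using t0 t by auto
    show "((\<lambda>x. - (real n - 3) * Lam n x) has_real_derivative - (real n - 3) * lam n x) (at x)"
      by (intro DERIV_cmult Lam_has_derivative x_in n_mem)
    show "((\<lambda>x. - ln (tB - x) / 4) has_real_derivative 1 / (4 * (tB - x))) (at x)"
      using x_in by (auto intro!: derivative_eq_intros simp: field_simps)
    have "\<bar>real n - 3\<bar> \<le> real n" using n by auto
    then have "\<bar>(real n - 3) * (lam n x * (tB - x))\<bar> \<le> real n * (1 / (4 * real n))"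
      unfolding abs_mult using small[of x] x t by (intro mult_mono) auto
    also have "\<dots> = 1 / 4" using n by simp
    finally have "- ((real n - 3) * (lam n x * (tB - x))) \<le> 1 / 4"
      by (metis abs_ge_minus_self order_trans)
    moreover have "- (real n - 3) * lam n x * (4 * (tB - x)) = 4 * (- ((real n - 3) * (lam n x * (tB - x))))"
      by (simp add: algebra_simps)
    ultimately have "- (real n - 3) * lam n x * (4 * (tB - x)) \<le> 1" by simp
    then show "- (real n - 3) * lam n x \<le> 1 / (4 * (tB - x))"
      using x_in by (simp add: pos_le_divide_eq)
  qed
  then show ?thesis by (simp add: field_simps)
qed

lemma late_time_estimates:
  obtains t0 where "0 < t0" "t0 < tB"
    and "\<And>s. s \<in> {t0..<tB} \<Longrightarrow> \<bar>lam n s * (tB - s)\<bar> \<le> 1 / (4 * real n)"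
    and "\<And>s. s \<in> {t0..<tB} \<Longrightarrow> p / 2 * (tB - s) \<le> u1n s"
proof -
  have "eventually (\<lambda>t. dist (lam n t * (tB - t)) 0 < 1 / (4 * real n)) (at_left tB)"
    by (rule tendstoD[OF lam_n_tau_tendsto]) (use n in simp)
  moreover have "eventually (\<lambda>t. p / 2 < u1n t / (tB - t)) (at_left tB)"
    by (rule order_tendstoD(1)[OF u1n_div_tendsto]) (use p_pos in simp)
  ultimately have "eventually (\<lambda>t. \<bar>lam n t * (tB - t)\<bar> \<le> 1 / (4 * real n)
      \<and> p / 2 * (tB - t) \<le> u1n t) (at_left tB)"
    using eventually_at_left_interior
  proof eventually_elim
    case (elim t)
    then have "p / 2 * (tB - t) < u1n t" by (simp add: pos_less_divide_eq)
    with elim show ?case by (simp add: dist_real_def)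
  qed
  then obtain t0 where "0 < t0" "t0 < tB"
    and "\<And>s. t0 \<le> s \<Longrightarrow> s < tB \<Longrightarrow>
      \<bar>lam n s * (tB - s)\<bar> \<le> 1 / (4 * real n) \<and> p / 2 * (tB - s) \<le> u1n s"
    using eventually_at_left_obtain[OF _ tB] by blast
  then show ?thesis using that by auto
qed

lemma pot_u_n_le_exp:
  assumes t: "t \<in> {0..<tB}"
  shows "pot t * u n t
    \<le> k / real n * (rho0 / (\<Prod>j=2..n. beta j)) * (exp (- (real n - 3) * Lam n t) / u1n t)"
proof -
  have "pot t \<le> k / real n * rho t"
    unfolding pot_def right_diff_distrib using k cb by simp
  then have "pot t * u n t \<le> k / real n * rho t * u n t"
    by (rule mult_right_mono) (rule less_imp_le[OF u_pos])
  also have "\<dots> \<le> k / real n * (rho0 / (\<Prod>j=2..n. beta j) * exp (- Lam 1 t - (real n - 2) * Lam n t))"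
    unfolding mult.assoc by (rule mult_left_mono[OF rho_u_n_le[OF t]]) (use k in simp)
  also have "exp (- Lam 1 t - (real n - 2) * Lam n t) = exp (- (real n - 3) * Lam n t) / u1n t"
    by (simp add: u1n_def u_def exp_diff[symmetric] exp_add[symmetric] algebra_simps)
  finally show ?thesis by (simp only: mult.assoc)
qed

lemma pot_u_n_le_powr:
  obtains t0 K where "0 < t0" "t0 < tB" "0 \<le> K"
    and "\<And>t. t \<in> {t0..<tB} \<Longrightarrow> pot t * u n t \<le> K * (tB - t) powr (- 5 / 4)"
proof -
  obtain t0 where t0: "0 < t0" "t0 < tB"
    and small: "\<And>s. s \<in> {t0..<tB} \<Longrightarrow> \<bar>lam n s * (tB - s)\<bar> \<le> 1 / (4 * real n)"
    and large: "\<And>s. s \<in> {t0..<tB} \<Longrightarrow> p / 2 * (tB - s) \<le> u1n s"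
    using late_time_estimates by blast
  define C where "C = k / real n * (rho0 / (\<Prod>j=2..n. beta j))"
  define K where "K = C * exp (- (real n - 3) * Lam n t0) * (tB - t0) powr (1 / 4) * (2 / p)"
  have "0 < (\<Prod>j=2..n. beta j)" by (rule prod_pos) (use beta_pos in auto)
  then have C: "0 \<le> C" using k rho0 by (simp add: C_def)
  show ?thesis
  proof (rule that[OF t0, of K])
    show "0 \<le> K" using C p_pos by (simp add: K_def)
    fix t assume t: "t \<in> {t0..<tB}"
    define \<tau> where "\<tau> = tB - t"
    have \<tau>: "0 < \<tau>" "0 < tB - t0" using t t0 by (auto simp: \<tau>_def)
    have t': "t \<in> {0..<tB}" using t t0 by auto
    have "pot t * u n t \<le> C * (exp (- (real n - 3) * Lam n t) / u1n t)"
      unfolding C_def by (rule pot_u_n_le_exp[OF t'])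
    also have "C * (exp (- (real n - 3) * Lam n t) / u1n t)
        \<le> C * (exp (- (real n - 3) * Lam n t0 + (ln (tB - t0) - ln \<tau>) / 4) / (p / 2 * \<tau>))"
      using Lam_n_growth[OF t0(1) _ _ small] t large[OF t] p_pos \<tau> u1n_pos[of t] C
      by (intro mult_left_mono frac_le) (auto simp: \<tau>_def)
    also have "exp (- (real n - 3) * Lam n t0 + (ln (tB - t0) - ln \<tau>) / 4)
        = exp (- (real n - 3) * Lam n t0) * (tB - t0) powr (1 / 4) * \<tau> powr (- 1 / 4)"
      using \<tau> by (simp add: powr_def exp_add[symmetric] algebra_simps diff_divide_distrib)
    also have "C * (exp (- (real n - 3) * Lam n t0) * (tB - t0) powr (1 / 4) * \<tau> powr (- 1 / 4)
        / (p / 2 * \<tau>)) = K * (\<tau> powr (- 1 / 4) / \<tau>)"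
      by (simp add: K_def field_simps)
    also have "\<tau> powr (- 1 / 4) / \<tau> = \<tau> powr (- 5 / 4)"
    proof -
      have "\<tau> powr (- 5 / 4) = \<tau> powr (- 1 / 4 - 1)" by simp
      also have "\<dots> = \<tau> powr (- 1 / 4) / \<tau> powr 1" by (rule powr_diff)
      finally show ?thesis using \<tau> by simp
    qed
    finally show "pot t * u n t \<le> K * (tB - t) powr (- 5 / 4)" by (simp add: \<tau>_def)
  qed
qed

lemma u_n_bounded_above:
  obtains t0 Bu where "0 < t0" "t0 < tB" "\<And>t. t \<in> {t0..<tB} \<Longrightarrow> u n t \<le> Bu"
proof -
  obtain t0 K where t0: "0 < t0" "t0 < tB" and K: "0 \<le> K"
    and pot_u: "\<And>t. t \<in> {t0..<tB} \<Longrightarrow> pot t * u n t \<le> K * (tB - t) powr (- 5 / 4)"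
    using pot_u_n_le_powr by blast
  have "u n t \<le> u n t0 + \<bar>du n t0\<bar> * (tB - t0) + K / ((1 - 3 / 4) * (3 / 4)) * (tB - t0) powr (3 / 4)"
    if "t \<in> {t0..<tB}" for t
  proof (rule upper_bound_of_second_deriv_le_powr[where f' = "du n" and f'' = "\<lambda>x. pot x * u n x"])
    show "x \<in> {t0..<tB} \<Longrightarrow> pot x * u n x \<le> K * (tB - x) powr (3 / 4 - 2)" for x
      using pot_u[of x] by simp
  qed (use that t0 K u_has_derivative du_has_derivative n_mem in auto)
  with t0 show ?thesis using that by blast
qed

lemma u_n_converges: "\<exists>l. (u n \<longlongrightarrow> l) (at_left tB)"
proof -
  obtain t0 Bu where t0: "0 < t0" "t0 < tB" and u_le: "\<And>t. t \<in> {t0..<tB} \<Longrightarrow> u n t \<le> Bu"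
    using u_n_bounded_above by blast
  have interior: "x \<in> {0<..<tB}" if "x \<in> {t0..<tB}" for x using that t0 by auto
  define D where "D = k / real n * cb * Bu"
  define C where "C = \<bar>du n t0\<bar> + D * (tB - t0)"
  show ?thesis
  proof (rule tendsto_at_left_of_deriv_bounded_below[OF t0(2)])
    show "(u n has_real_derivative du n x) (at x)" if "x \<in> {t0..<tB}" for x
      using u_has_derivative[OF interior[OF that] n_mem] .
    show "u n x \<le> Bu" if "x \<in> {t0..<tB}" for x using u_le[OF that] .
    fix x assume x: "x \<in> {t0..<tB}"
    have "- D * x - - D * t0 \<le> du n x - du n t0"
    proof (rule increment_le_of_deriv_le[where g' = "\<lambda>x. pot x * u n x"])
      fix y assume "y \<in> {t0..x}"
      then have y: "y \<in> {t0..<tB}" using x by auto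
      show "((\<lambda>x. - D * x) has_real_derivative - D) (at y)"
        using DERIV_cmult[OF DERIV_ident, of "- D" y] by simp
      show "(du n has_real_derivative pot y * u n y) (at y)"
        using du_has_derivative[OF interior[OF y] n_mem] .
      have "- (k / real n * cb) \<le> pot y"
      proof -
        have "0 \<le> k / real n * rho y"
          using rho_pos[of y] y t0 k by (intro mult_nonneg_nonneg) auto
        then show ?thesis unfolding pot_def right_diff_distrib by simp
      qed
      then have "- (k / real n * cb) * u n y \<le> pot y * u n y"
        by (rule mult_right_mono) (rule less_imp_le[OF u_pos])
      moreover have "k / real n * cb * u n y \<le> k / real n * cb * Bu"
        using u_le[OF y] k cb by (intro mult_left_mono) auto
      ultimately show "- D \<le> pot y * u n y" by (simp add: D_def)
    qed (use x in auto)
    moreover have "D * (x - t0) \<le> D * (tB - t0)"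
      using x k cb u_le[of t0] u_pos[of n t0] t0 by (intro mult_left_mono) (auto simp: D_def)
    ultimately show "- C \<le> du n x"
      unfolding C_def using abs_ge_minus_self[of "du n t0"] by (simp add: algebra_simps)
  qed
qed

lemma u_1_le_mult_u_n:
  assumes "t0 \<in> {0<..<tB}" "t0 \<le> t" "t < tB"
  shows "u 1 t \<le> u 1 t0 / u n t0 * u n t"
proof -
  have "Lam 1 t - Lam 1 t0 \<le> Lam n t - Lam n t0"
    using assms lam_le_n[OF _ one_mem] one_mem n_mem
    by (intro increment_le_of_deriv_le[where f' = "lam 1" and g' = "lam n"])
      (auto intro!: Lam_has_derivative)
  then have "exp (Lam 1 t) * exp (Lam n t0) \<le> exp (Lam 1 t0) * exp (Lam n t)"
    by (simp add: exp_add[symmetric])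
  then show ?thesis using u_pos[of n t0] by (simp add: u_def field_simps)
qed

lemma u_1_tendsto_0_if_u_n_tendsto_0:
  assumes u_n: "(u n \<longlongrightarrow> 0) (at_left tB)"
  shows "(u 1 \<longlongrightarrow> 0) (at_left tB)"
proof (rule tendsto_sandwich[OF _ _ tendsto_const])
  define t0 where "t0 = tB / 2"
  have t0: "t0 \<in> {0<..<tB}" using tB by (simp add: t0_def)
  show "eventually (\<lambda>t. 0 \<le> u 1 t) (at_left tB)" by (auto intro: always_eventually less_imp_le u_pos)
  show "eventually (\<lambda>t. u 1 t \<le> u 1 t0 / u n t0 * u n t) (at_left tB)"
    unfolding eventually_at_left_field
  proof (intro exI[of _ t0] conjI allI impI)
    fix t assume "t0 < t" "t < tB"
    then show "u 1 t \<le> u 1 t0 / u n t0 * u n t" using u_1_le_mult_u_n[OF t0] by simp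
  qed (use t0 in simp)
  show "((\<lambda>t. u 1 t0 / u n t0 * u n t) \<longlongrightarrow> 0) (at_left tB)"
    using tendsto_mult[OF tendsto_const u_n, of "u 1 t0 / u n t0"] by simp
qed

text \<open>If \<open>u n\<close> tended to \<open>0\<close>, then \<open>rho\<close> would blow up and \<open>u n\<close> would be convex near
  \<open>tB\<close>; a positive convex function can only tend to \<open>0\<close> if its logarithmic derivative
  \<open>lam n\<close> stays below \<open>-1 / (tB - t)\<close>.\<close>

lemma lam_n_tau_le_if_u_n_tendsto_0:
  assumes u_n: "(u n \<longlongrightarrow> 0) (at_left tB)"
  obtains t1 where "0 < t1" "t1 < tB" "\<And>t. t1 \<le> t \<Longrightarrow> t < tB \<Longrightarrow> lam n t * (tB - t) \<le> -1"
proof -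
  have "((\<lambda>t. \<Prod>j=1..n. u j t) \<longlongrightarrow> 0) (at_left tB)"
    by (rule prod_u_tendsto_0[OF u_1_tendsto_0_if_u_n_tendsto_0[OF u_n] u_n])
  from pot_eventually_pos_if_prod_u_tendsto_0[OF this] obtain t1 where t1: "0 < t1" "t1 < tB"
    and mono: "\<And>s t. t1 \<le> s \<Longrightarrow> s \<le> t \<Longrightarrow> t < tB \<Longrightarrow> du n s \<le> du n t"
    using du_eventually_mono[OF _ n_mem] by blast
  have "lam n t * (tB - t) \<le> -1" if t: "t1 \<le> t" "t < tB" for t
  proof -
    have "u n t + du n t * (tB - t) \<le> 0"
    proof (rule tangent_le_limit_at_left[OF t(2) _ _ u_n])
      show "(u n has_real_derivative du n x) (at x)" if "x \<in> {t..<tB}" for x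
        using u_has_derivative[OF _ n_mem] that t t1 by auto
      show "du n t \<le> du n x" if "x \<in> {t..<tB}" for x
        using mono that t by auto
    qed
    then have "(lam n t * (tB - t) + 1) * u n t \<le> 0" by (simp add: du_def algebra_simps)
    then show ?thesis using u_pos[of n t] by (simp add: mult_le_0_iff)
  qed
  with t1 show ?thesis using that by blast
qed

lemma u_n_limit_pos: obtains l where "0 < l" "(u n \<longlongrightarrow> l) (at_left tB)"
proof -
  obtain l where l: "(u n \<longlongrightarrow> l) (at_left tB)" using u_n_converges by blast
  have "0 \<le> l"
    by (rule tendsto_lowerbound[OF l]) (auto intro: always_eventually less_imp_le u_pos)
  moreover have "l \<noteq> 0"
  proof
    assume "l = 0"
    then obtain t1 where t1: "0 < t1" "t1 < tB"
      and blowup: "\<And>t. t1 \<le> t \<Longrightarrow> t < tB \<Longrightarrow> lam n t * (tB - t) \<le> -1"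
      using lam_n_tau_le_if_u_n_tendsto_0 l by blast
    have "eventually (\<lambda>t. \<bar>lam n t * (tB - t)\<bar> < 1) (at_left tB)"
      using tendstoD[OF lam_n_tau_tendsto, of 1] by simp
    then obtain t2 where "t1 < t2" "t2 < tB" "\<bar>lam n t2 * (tB - t2)\<bar> < 1"
      using eventually_at_left_obtain[OF _ t1(2)] by blast
    with blowup[of t2] show False by linarith
  qed
  ultimately have "0 < l" by simp
  then show ?thesis using l by (rule that)
qed

lemma u_1_tendsto_0: "(u 1 \<longlongrightarrow> 0) (at_left tB)"
proof -
  obtain l where l: "0 < l" "(u n \<longlongrightarrow> l) (at_left tB)" by (rule u_n_limit_pos)
  have "((\<lambda>t. u1n t / u n t) \<longlongrightarrow> 0 / l) (at_left tB)"
    using l by (intro tendsto_divide u1n_tendsto_0) auto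
  moreover have "u1n t / u n t = u 1 t" for t
    using u_pos[of n t] by (simp add: u1n_def)
  ultimately show ?thesis by simp
qed

lemma pot_eventually_pos: "eventually (\<lambda>t. 0 < pot t) (at_left tB)"
  using u_n_limit_pos by (metis pot_eventually_pos_if_prod_u_tendsto_0 prod_u_tendsto_0 u_1_tendsto_0)

lemma u_limit_pos:
  assumes i: "i \<in> {2..n}"
  obtains L where "0 < L" "(u i \<longlongrightarrow> L) (at_left tB)"
proof -
  obtain l where l: "0 < l" "(u n \<longlongrightarrow> l) (at_left tB)" by (rule u_n_limit_pos)
  have "((\<lambda>t. ((lam0 i - lam0 1) * u n t + (lam0 n - lam0 i) * u 1 t) / (lam0 n - lam0 1))
      \<longlongrightarrow> ((lam0 i - lam0 1) * l + (lam0 n - lam0 i) * 0) / (lam0 n - lam0 1)) (at_left tB)"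
    by (intro tendsto_intros l u_1_tendsto_0) (use lam0_1_less_n in simp)
  moreover have "eventually (\<lambda>t. ((lam0 i - lam0 1) * u n t + (lam0 n - lam0 i) * u 1 t)
      / (lam0 n - lam0 1) = u i t) (at_left tB)"
    using eventually_at_left_interior
    by eventually_elim (use u_decomp i lam0_1_less_n in \<open>auto simp: field_simps\<close>)
  ultimately have "(u i \<longlongrightarrow> beta i * l) (at_left tB)"
    by (auto simp: beta_def intro: Lim_transform_eventually)
  moreover have "0 < beta i * l" using beta_pos[OF i] l by simp
  ultimately show ?thesis using that by blast
qed

text \<open>Since \<open>du i = lam i * u i\<close> is eventually monotone, \<open>lam i\<close> eventually has a sign.\<close>

lemma lam_eventually_signed:
  assumes i: "i \<in> {1..n}"
  obtains c where "0 < c" "c < tB"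
    and "(\<forall>x\<in>{c<..<tB}. 0 \<le> lam i x) \<or> (\<forall>x\<in>{c<..<tB}. lam i x \<le> 0)"
proof -
  obtain t1 where t1: "0 < t1" "t1 < tB"
    and mono: "\<And>s t. t1 \<le> s \<Longrightarrow> s \<le> t \<Longrightarrow> t < tB \<Longrightarrow> du i s \<le> du i t"
    using du_eventually_mono[OF pot_eventually_pos i] by blast
  have sign_du: "0 \<le> du i x \<longleftrightarrow> 0 \<le> lam i x" for x
    using u_pos[of i x] by (simp add: du_def zero_le_mult_iff)
  show ?thesis
  proof (cases "\<exists>s\<in>{t1..<tB}. 0 \<le> du i s")
    case True
    then obtain s where s: "t1 \<le> s" "s < tB" "0 \<le> du i s" by auto
    have "0 \<le> lam i x" if "x \<in> {s<..<tB}" for x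
    proof -
      have "du i s \<le> du i x" using mono[of s x] s that by auto
      then show ?thesis using s(3) sign_du[of x] by linarith
    qed
    then have "\<forall>x\<in>{s<..<tB}. 0 \<le> lam i x" by blast
    moreover have "0 < s" using s t1 by simp
    ultimately show ?thesis using that s(2) by blast
  next
    case False
    have "lam i x \<le> 0" if "x \<in> {t1<..<tB}" for x
    proof -
      have "x \<in> {t1..<tB}" using that by auto
      with False have "\<not> 0 \<le> du i x" by blast
      then show ?thesis using sign_du[of x] by linarith
    qed
    with t1 show ?thesis using that by blast
  qed
qed

lemma lam_absolutely_integrable:
  assumes i2: "i \<in> {2..n}"
  shows "lam i absolutely_integrable_on {0<..<tB}"
proof -
  have i: "i \<in> {1..n}" using i2 by auto
  obtain L where L: "0 < L" "(u i \<longlongrightarrow> L) (at_left tB)" using u_limit_pos[OF i2] by blast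
  have Lam_lim: "(Lam i \<longlongrightarrow> ln L) (at_left tB)"
    using tendsto_ln[OF L(2)] L(1) by (simp add: u_def)
  obtain c where c: "0 < c" "c < tB"
    and sign: "(\<forall>x\<in>{c<..<tB}. 0 \<le> lam i x) \<or> (\<forall>x\<in>{c<..<tB}. lam i x \<le> 0)"
    using lam_eventually_signed[OF i] by blast
  have "lam i absolutely_integrable_on {c<..<tB}"
  proof (rule absolutely_integrable_of_signed_deriv_tendsto[OF c(2) _ _ sign _ Lam_lim])
    show "(Lam i has_real_derivative lam i x) (at x)" if "x \<in> {c<..<tB}" for x
      using Lam_has_derivative[OF _ i] that c by auto
    show "continuous_on {c<..<tB} (lam i)"
      by (rule continuous_on_subset[OF continuous_on_lam[OF i]]) (use c in auto)
    have "c \<in> {0<..<tB}" using c by auto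
    then have "isCont (Lam i) c" by (rule DERIV_continuous[OF Lam_has_derivative[OF _ i]])
    then show "(Lam i \<longlongrightarrow> Lam i c) (at_right c)"
      by (simp add: isCont_def filterlim_at_split)
  qed
  then show ?thesis
    using c by (intro absolutely_integrable_on_Ioo_of_tail[OF continuous_on_lam[OF i]]) auto
qed

lemma integral_R1_converges:
  "\<exists>C. ((\<lambda>t. integral {0..t} (\<lambda>s. lam 1 s + 1 / (tB - s))) \<longlongrightarrow> C) (at_left tB)"
proof -
  obtain l where l: "0 < l" "(u n \<longlongrightarrow> l) (at_left tB)" by (rule u_n_limit_pos)
  have "((\<lambda>t. ln (u1n t / (tB - t) / u n t) + ln tB) \<longlongrightarrow> ln (p / l) + ln tB) (at_left tB)"
    using l p_pos by (intro tendsto_intros u1n_div_tendsto) auto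
  moreover have "eventually (\<lambda>t. ln (u1n t / (tB - t) / u n t) + ln tB
      = integral {0..t} (\<lambda>s. lam 1 s + 1 / (tB - s))) (at_left tB)"
    using eventually_at_left_interior
  proof eventually_elim
    case (elim t)
    have "((\<lambda>s. 1 / (tB - s)) has_integral (- ln (tB - t)) - (- ln (tB - 0))) {0..t}"
    proof (rule fundamental_theorem_of_calculus)
      fix x assume "x \<in> {0..t}"
      then have "((\<lambda>s. - ln (tB - s)) has_real_derivative 1 / (tB - x)) (at x)"
        using elim by (auto intro!: derivative_eq_intros simp: field_simps)
      then show "((\<lambda>s. - ln (tB - s)) has_vector_derivative 1 / (tB - x)) (at x within {0..t})"
        by (simp add: has_real_derivative_iff_has_vector_derivative has_vector_derivative_at_within)
    qed (use elim in simp)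
    moreover have "(lam 1 has_integral Lam 1 t) {0..t}"
      unfolding Lam_def using elim
      by (intro integrable_integral integrable_continuous_interval continuous_on_subset[OF
            continuous_on_lam[OF one_mem]]) auto
    ultimately have "integral {0..t} (\<lambda>s. lam 1 s + 1 / (tB - s)) = Lam 1 t + (ln tB - ln (tB - t))"
      by (intro integral_unique has_integral_add) simp_all
    moreover have "u1n t / (tB - t) / u n t = exp (Lam 1 t) / (tB - t)"
      using u_pos[of n t] by (simp add: u1n_def u_def)
    ultimately show ?case
      using elim by (simp add: ln_div)
  qed
  ultimately show ?thesis by (blast intro: Lim_transform_eventually)
qed

end

theorem lemma4p3:
  fixes n :: nat and k cb rho0 tB p q :: real
    and lam0 :: "nat \<Rightarrow> real" and lam :: "nat \<Rightarrow> real \<Rightarrow> real" and rho :: "real \<Rightarrow> real"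
    and u :: "nat \<Rightarrow> real \<Rightarrow> real" and R1 :: "real \<Rightarrow> real"
  assumes n: "n \<ge> 2" and k: "k > 0" and cb: "cb > 0" and rho0: "rho0 > 0"
    and lam0_12: "lam0 1 < lam0 2"
    and lam0_mono: "\<forall>i\<in>{2..<n}. lam0 i \<le> lam0 (i + 1)"
    and sol: "maximal_solution n k cb rho0 lam0 tB lam rho"
    and tB: "0 < tB"
    and u_def: "\<And>i t. u i t = exp (integral {0..t} (lam i))"
    and lim1: "((\<lambda>t. deriv (u 1) t * u n t) \<longlongrightarrow> - p) (at_left tB)"
    and limn: "((\<lambda>t. u 1 t * deriv (u n) t) \<longlongrightarrow> q) (at_left tB)"
    and pq: "p > q"
    and xi1: "(- p / (p - q))^2 + (- p / (p - q)) = 0"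
    and xin: "(q / (p - q))^2 + q / (p - q) = 0"
    and R1_def: "\<And>t. R1 t = lam 1 t + 1 / (tB - t)"
  shows "(\<forall>i\<in>{2..n}. lam i absolutely_integrable_on {0<..<tB}) \<and>
         (\<exists>C. ((\<lambda>t. integral {0..t} R1) \<longlongrightarrow> C) (at_left tB))"
proof -
  interpret S: riccati_solution n k cb rho0 tB lam0 lam rho
    using n k cb rho0 lam0_12 lam0_mono sol tB by unfold_locales (auto simp: maximal_solution_def)
  have u_eq: "u = S.u" by (intro ext) (simp add: u_def S.u_def S.Lam_def)
  have deriv_u: "eventually (\<lambda>t. deriv (S.u i) t = S.du i t) (at_left tB)" if "i \<in> {1..n}" for i
    using S.eventually_at_left_interior
    by eventually_elim (auto intro!: DERIV_imp_deriv S.u_has_derivative that)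
  have "((\<lambda>t. S.du 1 t * S.u n t) \<longlongrightarrow> - p) (at_left tB)"
    using lim1 unfolding u_eq
    by (rule Lim_transform_eventually) (use deriv_u[OF S.one_mem] in \<open>auto elim: eventually_mono\<close>)
  moreover have "((\<lambda>t. S.u 1 t * S.du n t) \<longlongrightarrow> q) (at_left tB)"
    using limn unfolding u_eq
    by (rule Lim_transform_eventually) (use deriv_u[OF S.n_mem] in \<open>auto elim: eventually_mono\<close>)
  ultimately interpret riccati_blowup n k cb rho0 tB lam0 lam rho p q
    using sol pq xi1 by unfold_locales (auto simp: maximal_solution_def)
  show ?thesis
    using lam_absolutely_integrable integral_R1_converges by (simp add: R1_def[abs_def])
qed

end
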